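(* Fix a set partition $\mathcal B=\{B_1,\dots,B_k\}$ of $[n]$ with $\min B_1<\cdots<\min B_k$, and let $X=\{(i,j): i<j,\ B_i,B_j \text{ nested}\}$. For each $A\subseteq X$ let $W_A$ be the set of packed words $w$ with $\mathrm{setpar}(w)=\mathcal B$, $A\subseteq\mathrm{Inv}(w)$ and $(X\setminus A)\cap\mathrm{Inv}(w)=\emptyset$. Then each nonempty $W_A$ is a connected component of the planar weak order on packed words of length $n$, and every connected component arises this way. Each connected component $W$ is a bounded lattice, order-isomorphic via $\mathrm{delrpt}$ to an interval of the weak order on $S_k$; in particular for $u,w\in W$, $$u\vee w=\mathrm{pw}(\mathcal B,\mathrm{delrpt}(u)\vee\mathrm{delrpt}(w)),\qquad u\wedge w=\mathrm{pw}(\mathcal B,\mathrm{delrpt}(u)\wedge\mathrm{delrpt}(w)).$$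
   Context: A packed word is a word $w=w_1\cdots w_n$ of positive integers whose set of letters is $\{1,\dots,m\}$ for some $m$; $w^{-1}(a)=\{p:w_p=a\}$. $\mathrm{iInv}(w)=\{(a,b):a<b,\ \min w^{-1}(a)>\max w^{-1}(b)\}$. $T_a(w)$ swaps the letters $a$ and $a+1$ in $w$. The planar weak order on packed words of length $n$ is the reflexive–transitive closure of: $u$ is covered by $w$ iff $u=T_a(w)$ for some $a$ and $|\mathrm{iInv}(w)|=|\mathrm{iInv}(u)|+1$; connected components are those of its Hasse diagram. $\mathrm{setpar}(w)$ is the set partition of $[n]$ into the nonempty fibres $w^{-1}(a)$. If its blocks are $B_1,\dots,B_k$ with $\min B_1<\cdots<\min B_k$ and $b_i=\min B_i$, then $\mathrm{delrpt}(w)$ is the permutation $w_{b_1}w_{b_2}\cdots w_{b_k}\in S_k$ (first occurrences of each letter) and $\mathrm{Inv}(w)=\{(i,j):i<j,\ w_{b_i}>w_{b_j}\}$. Conversely for such $\mathcal B$ and $\sigma\in S_k$, $\mathrm{pw}(\mathcal B,\sigma)$ is the packed word with letter $\sigma(i)$ at every position of $B_i$. Two blocks $B_i,B_j$ are nested if $\min B_i<\min B_j<\max B_i$. The weak order on $S_k$: $\sigma\le\tau$ iff $\mathrm{Inv}(\sigma)\subseteq\mathrm{Inv}(\tau)$, where $\mathrm{Inv}(\sigma)=\{(i,j):i<j,\sigma(i)>\sigma(j)\}$; it is a lattice with join $\vee$ and meet $\wedge$. *)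

theory Defs
  imports Main
begin

text \<open>Words are lists of naturals; positions are 1-based, so position p of w is w ! (p - 1).\<close>

definition packed :: "nat list \<Rightarrow> bool" where
  "packed w \<longleftrightarrow> (\<exists>m. set w = {1..m})"

definition PW :: "nat \<Rightarrow> nat list set" where
  "PW n = {w. packed w \<and> length w = n}"

definition fibre :: "nat list \<Rightarrow> nat \<Rightarrow> nat set" where
  "fibre w a = {p. 1 \<le> p \<and> p \<le> length w \<and> w ! (p - 1) = a}"

definition iInv :: "nat list \<Rightarrow> (nat \<times> nat) set" where
  "iInv w = {(a, b). a \<in> set w \<and> b \<in> set w \<and> a < b \<and>
                     Min (fibre w a) > Max (fibre w b)}"

definition T :: "nat \<Rightarrow> nat list \<Rightarrow> nat list" where
  "T a w = map (\<lambda>x. if x = a then a + 1 else if x = a + 1 then a else x) w"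

definition pcover :: "nat \<Rightarrow> nat list \<Rightarrow> nat list \<Rightarrow> bool" where
  "pcover n u w \<longleftrightarrow> u \<in> PW n \<and> w \<in> PW n \<and>
     (\<exists>a. u = T a w \<and> card (iInv w) = card (iInv u) + 1)"

definition pwo_le :: "nat \<Rightarrow> nat list \<Rightarrow> nat list \<Rightarrow> bool" where
  "pwo_le n u w \<longleftrightarrow> (u = w \<and> u \<in> PW n) \<or> (pcover n)\<^sup>+\<^sup>+ u w"

definition pwo_lt :: "nat \<Rightarrow> nat list \<Rightarrow> nat list \<Rightarrow> bool" where
  "pwo_lt n u w \<longleftrightarrow> pwo_le n u w \<and> u \<noteq> w"

definition hasse :: "nat \<Rightarrow> nat list \<Rightarrow> nat list \<Rightarrow> bool" where
  "hasse n u w \<longleftrightarrow> pwo_lt n u w \<and> \<not> (\<exists>z. pwo_lt n u z \<and> pwo_lt n z w)"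

definition pconn :: "nat \<Rightarrow> nat list \<Rightarrow> nat list \<Rightarrow> bool" where
  "pconn n = (\<lambda>u w. hasse n u w \<or> hasse n w u)\<^sup>*\<^sup>*"

definition is_component :: "nat \<Rightarrow> nat list set \<Rightarrow> bool" where
  "is_component n W \<longleftrightarrow> (\<exists>u \<in> PW n. W = {v \<in> PW n. pconn n u v})"

definition setpar :: "nat list \<Rightarrow> nat set set" where
  "setpar w = {fibre w a | a. a \<in> set w}"

definition ordered_partition :: "nat \<Rightarrow> nat set list \<Rightarrow> bool" where
  "ordered_partition n Bs \<longleftrightarrow>
     (\<forall>B \<in> set Bs. B \<noteq> {}) \<and> \<Union>(set Bs) = {1..n} \<and>
     (\<forall>i j. i < length Bs \<and> j < length Bs \<and> i \<noteq> j \<longrightarrow> Bs ! i \<inter> Bs ! j = {}) \<and>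
     (\<forall>i j. i < j \<and> j < length Bs \<longrightarrow> Min (Bs ! i) < Min (Bs ! j))"

definition firsts :: "nat list \<Rightarrow> nat list" where
  "firsts w = sorted_list_of_set {Min (fibre w a) | a. a \<in> set w}"

definition delrpt :: "nat list \<Rightarrow> nat list" where
  "delrpt w = map (\<lambda>b. w ! (b - 1)) (firsts w)"

text \<open>Permutations in S_k as lists (one-line notation), 1-based values.\<close>
definition perms :: "nat \<Rightarrow> nat list set" where
  "perms k = {\<sigma>. length \<sigma> = k \<and> distinct \<sigma> \<and> set \<sigma> = {1..k}}"

definition perm_Inv :: "nat list \<Rightarrow> (nat \<times> nat) set" where
  "perm_Inv \<sigma> = {(i, j). 1 \<le> i \<and> i < j \<and> j \<le> length \<sigma> \<and> \<sigma> ! (i - 1) > \<sigma> ! (j - 1)}"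

definition Inv :: "nat list \<Rightarrow> (nat \<times> nat) set" where
  "Inv w = perm_Inv (delrpt w)"

definition perm_le :: "nat list \<Rightarrow> nat list \<Rightarrow> bool" where
  "perm_le \<sigma> \<tau> \<longleftrightarrow> perm_Inv \<sigma> \<subseteq> perm_Inv \<tau>"

definition is_lub_on :: "('a \<Rightarrow> 'a \<Rightarrow> bool) \<Rightarrow> 'a set \<Rightarrow> 'a \<Rightarrow> 'a \<Rightarrow> 'a \<Rightarrow> bool" where
  "is_lub_on le S x y z \<longleftrightarrow> z \<in> S \<and> le x z \<and> le y z \<and> (\<forall>z'\<in>S. le x z' \<and> le y z' \<longrightarrow> le z z')"

definition is_glb_on :: "('a \<Rightarrow> 'a \<Rightarrow> bool) \<Rightarrow> 'a set \<Rightarrow> 'a \<Rightarrow> 'a \<Rightarrow> 'a \<Rightarrow> bool" where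
  "is_glb_on le S x y z \<longleftrightarrow> z \<in> S \<and> le z x \<and> le z y \<and> (\<forall>z'\<in>S. le z' x \<and> le z' y \<longrightarrow> le z' z)"

definition perm_join :: "nat list \<Rightarrow> nat list \<Rightarrow> nat list" where
  "perm_join \<sigma> \<tau> = (THE \<rho>. is_lub_on perm_le (perms (length \<sigma>)) \<sigma> \<tau> \<rho>)"

definition perm_meet :: "nat list \<Rightarrow> nat list \<Rightarrow> nat list" where
  "perm_meet \<sigma> \<tau> = (THE \<rho>. is_glb_on perm_le (perms (length \<sigma>)) \<sigma> \<tau> \<rho>)"

text \<open>pw(B, sigma): letter sigma(i) at every position of B_i.\<close>
definition pw :: "nat set list \<Rightarrow> nat list \<Rightarrow> nat list" where
  "pw Bs \<sigma> = map (\<lambda>p. \<sigma> ! (THE i. i < length Bs \<and> p \<in> Bs ! i))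
                  [1..<card (\<Union>(set Bs)) + 1]"

text \<open>Nested pairs X (1-based block indices).\<close>
definition nestedX :: "nat set list \<Rightarrow> (nat \<times> nat) set" where
  "nestedX Bs = {(i, j). 1 \<le> i \<and> i < j \<and> j \<le> length Bs \<and>
       Min (Bs ! (i - 1)) < Min (Bs ! (j - 1)) \<and> Min (Bs ! (j - 1)) < Max (Bs ! (i - 1))}"

definition WA :: "nat \<Rightarrow> nat set list \<Rightarrow> (nat \<times> nat) set \<Rightarrow> nat list set" where
  "WA n Bs A = {w \<in> PW n. setpar w = set Bs \<and> A \<subseteq> Inv w \<and> (nestedX Bs - A) \<inter> Inv w = {}}"

end

theory Submission
  imports Defs "HOL-Combinatorics.Transposition"
begin

text \<open>Writing the letter \<open>\<sigma>(i)\<close> on block \<open>i\<close>,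
  \<open>pw Bs\<close> is a bijection from \<open>S\<^sub>k\<close> onto the packed words with set partition \<open>Bs\<close>, inverse to
  \<open>delrpt\<close>, and the inversions \<open>iInv\<close> of the word \<open>pw Bs \<sigma>\<close> correspond to the non-nested
  inversions of \<open>\<sigma>\<close>. A cover of the planar weak order swaps two adjacent letters and lowers
  \<open>|iInv|\<close> by one, so among these words it removes exactly one non-nested inversion of \<open>\<sigma>\<close>.
  Conversely, if \<open>Inv \<sigma> \<subset> Inv \<tau>\<close> then some inversion of \<open>\<tau>\<close> outside \<open>Inv \<sigma>\<close> is formed by
  adjacent values and can be swapped away. Hence \<open>u \<le> w\<close> iff \<open>Inv u \<subseteq> Inv w\<close> with the same nested
  part: the components are the classes \<open>W\<^sub>A\<close>, and \<open>delrpt\<close> is an order isomorphism from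
  \<open>W\<^sub>A\<close> onto the permutations whose nested inversions are exactly \<open>A\<close>.

  Inversion sets of joins and meets in the weak order are transitive closures (of the union,
  respectively of the union of the complements), and nestedness of \<open>(a, c)\<close> is inherited by
  \<open>(a, b)\<close> for \<open>a < b < c\<close>; so this set of permutations is closed under joins and meets. Being
  finite, it has a least and a greatest element, and it is the whole interval between them
  because the nested part of every permutation in between is squeezed to \<open>A\<close>.\<close>

lemma is_lub_on_unique:
  assumes "is_lub_on le S x y z" "is_lub_on le S x y z'"
    and "\<And>a b. a \<in> S \<Longrightarrow> b \<in> S \<Longrightarrow> le a b \<Longrightarrow> le b a \<Longrightarrow> a = b"
  shows "z' = z"
  using assms unfolding is_lub_on_def by blast

lemma is_glb_on_unique:
  assumes "is_glb_on le S x y z" "is_glb_on le S x y z'"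
    and "\<And>a b. a \<in> S \<Longrightarrow> b \<in> S \<Longrightarrow> le a b \<Longrightarrow> le b a \<Longrightarrow> a = b"
  shows "z' = z"
  using assms unfolding is_glb_on_def by blast

lemma is_lub_on_conv_is_glb_on: "is_lub_on le S x y z \<longleftrightarrow> is_glb_on (\<lambda>a b. le b a) S x y z"
  unfolding is_lub_on_def is_glb_on_def by blast

lemma is_lub_on_transfer:
  assumes iso: "\<And>x y. x \<in> W \<Longrightarrow> y \<in> W \<Longrightarrow> le x y \<longleftrightarrow> le' (f x) (f y)" and "f ` W \<subseteq> S"
    and "u \<in> W" "w \<in> W" and lub: "is_lub_on le' S (f u) (f w) z" and "g z \<in> W" "f (g z) = z"
  shows "is_lub_on le W u w (g z)"
  unfolding is_lub_on_def
proof (intro conjI ballI impI)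
  show "g z \<in> W" "le u (g z)" "le w (g z)"
    using assms lub unfolding is_lub_on_def by auto
  fix z' assume "z' \<in> W" "le u z' \<and> le w z'"
  with assms show "le (g z) z'" using lub unfolding is_lub_on_def by auto
qed

lemma is_glb_on_transfer:
  assumes iso: "\<And>x y. x \<in> W \<Longrightarrow> y \<in> W \<Longrightarrow> le x y \<longleftrightarrow> le' (f x) (f y)" and "f ` W \<subseteq> S"
    and "u \<in> W" "w \<in> W" and glb: "is_glb_on le' S (f u) (f w) z" and "g z \<in> W" "f (g z) = z"
  shows "is_glb_on le W u w (g z)"
  unfolding is_glb_on_def
proof (intro conjI ballI impI)
  show "g z \<in> W" "le (g z) u" "le (g z) w"
    using assms glb unfolding is_glb_on_def by auto
  fix z' assume "z' \<in> W" "le z' u \<and> le z' w"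
  with assms show "le z' (g z)" using glb unfolding is_glb_on_def by auto
qed

lemma finite_is_glb_on_obtains_least:
  assumes "finite S" "S \<noteq> {}"
    and trans: "\<And>x y z. x \<in> S \<Longrightarrow> y \<in> S \<Longrightarrow> z \<in> S \<Longrightarrow> le x y \<Longrightarrow> le y z \<Longrightarrow> le x z"
    and glb: "\<And>x y. x \<in> S \<Longrightarrow> y \<in> S \<Longrightarrow> \<exists>m. is_glb_on le S x y m"
  obtains b where "b \<in> S" "\<And>x. x \<in> S \<Longrightarrow> le b x"
proof -
  have "\<exists>b\<in>S. \<forall>x\<in>F. le b x" if "finite F" "F \<noteq> {}" "F \<subseteq> S" for F
    using that
  proof (induction rule: finite_ne_induct)
    case (singleton x)
    then show ?case using glb[of x x] unfolding is_glb_on_def by auto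
  next
    case (insert x F)
    then obtain b where b: "b \<in> S" "\<forall>y\<in>F. le b y" by auto
    obtain m where "is_glb_on le S x b m" using glb[of x b] b insert.prems by auto
    then have m: "m \<in> S" "le m x" "le m b" unfolding is_glb_on_def by auto
    have "le m y" if "y \<in> F" for y
      using trans[OF m(1) b(1) _ m(3)] b(2) that insert.prems by blast
    with m show ?case by blast
  qed
  from this[OF assms(1,2) order_refl] show thesis using that by blast
qed

section \<open>Inversion sets of permutations\<close>

definition pairs_upto :: "nat \<Rightarrow> (nat \<times> nat) set" where
  "pairs_upto k = {(i, j). 1 \<le> i \<and> i < j \<and> j \<le> k}"

definition cotrans :: "(nat \<times> nat) set \<Rightarrow> bool" where
  "cotrans I \<longleftrightarrow> (\<forall>i j l. (i, l) \<in> I \<and> i < j \<and> j < l \<longrightarrow> (i, j) \<in> I \<or> (j, l) \<in> I)"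

definition inversion_set :: "nat \<Rightarrow> (nat \<times> nat) set \<Rightarrow> bool" where
  "inversion_set k I \<longleftrightarrow> I \<subseteq> pairs_upto k \<and> trans I \<and> cotrans I"

lemma trans_pairs_upto: "trans (pairs_upto k)"
  unfolding trans_def pairs_upto_def by auto

lemma finite_pairs_upto: "finite (pairs_upto k)"
  by (rule finite_subset[of _ "{1..k} \<times> {1..k}"]) (auto simp: pairs_upto_def)

lemma trancl_subset_trans: "R \<subseteq> S \<Longrightarrow> trans S \<Longrightarrow> R\<^sup>+ \<subseteq> S"
  by (metis subsetI trancl_id trancl_mono)

lemma finite_perms: "finite (perms k)"
  by (rule finite_subset[OF _ finite_lists_length_eq[of "{1..k}" k]]) (auto simp: perms_def)

lemma perms_length: "\<sigma> \<in> perms k \<Longrightarrow> length \<sigma> = k"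
  unfolding perms_def by simp

lemma perms_nth_mem:
  assumes "\<sigma> \<in> perms k" "1 \<le> i" "i \<le> k"
  shows "\<sigma> ! (i - 1) \<in> {1..k}"
  using assms nth_mem[of "i - 1" \<sigma>] unfolding perms_def by auto

lemma perms_nth_eq_iff:
  assumes "\<sigma> \<in> perms k" "1 \<le> i" "i \<le> k" "1 \<le> j" "j \<le> k"
  shows "\<sigma> ! (i - 1) = \<sigma> ! (j - 1) \<longleftrightarrow> i = j"
  using assms nth_eq_iff_index_eq[of \<sigma> "i - 1" "j - 1"] unfolding perms_def by auto

lemma perms_nth_surj:
  assumes "\<sigma> \<in> perms k" "v \<in> {1..k}"
  obtains i where "1 \<le> i" "i \<le> k" "\<sigma> ! (i - 1) = v"
proof -
  have "v \<in> set \<sigma>" using assms unfolding perms_def by auto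
  then obtain p where "p < length \<sigma>" "\<sigma> ! p = v" by (auto simp: in_set_conv_nth)
  then show thesis using perms_length[OF assms(1)] by (intro that[of "Suc p"]) auto
qed

lemma perm_Inv_perms:
  assumes "\<sigma> \<in> perms k"
  shows "perm_Inv \<sigma> = {(i, j). 1 \<le> i \<and> i < j \<and> j \<le> k \<and> \<sigma> ! (i - 1) > \<sigma> ! (j - 1)}"
  using assms unfolding perm_Inv_def perms_def by auto

lemma inversion_set_perm_Inv: "\<sigma> \<in> perms k \<Longrightarrow> inversion_set k (perm_Inv \<sigma>)"
  unfolding inversion_set_def perm_Inv_perms pairs_upto_def trans_def cotrans_def by auto

lemma perm_Inv_subset_pairs_upto: "\<sigma> \<in> perms k \<Longrightarrow> perm_Inv \<sigma> \<subseteq> pairs_upto k"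
  using inversion_set_perm_Inv unfolding inversion_set_def by blast

lemma finite_perm_Inv: "\<sigma> \<in> perms k \<Longrightarrow> finite (perm_Inv \<sigma>)"
  using perm_Inv_subset_pairs_upto finite_pairs_upto finite_subset by blast

definition value_less :: "(nat \<times> nat) set \<Rightarrow> nat \<Rightarrow> nat \<Rightarrow> bool" where
  "value_less I j i \<longleftrightarrow> (j < i \<and> (j, i) \<notin> I) \<or> (i < j \<and> (i, j) \<in> I)"

lemma value_less_perm_Inv:
  assumes "\<sigma> \<in> perms k" "1 \<le> i" "i \<le> k" "1 \<le> j" "j \<le> k"
  shows "value_less (perm_Inv \<sigma>) j i \<longleftrightarrow> \<sigma> ! (j - 1) < \<sigma> ! (i - 1)"
  using perms_nth_eq_iff[OF assms] assms
  unfolding value_less_def perm_Inv_perms[OF assms(1)] by (auto simp: not_less_iff_gr_or_eq)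

lemma value_less_trans:
  assumes "inversion_set k I" "value_less I a b" "value_less I b c"
  shows "value_less I a c"
proof -
  have t: "\<And>x y z. (x, y) \<in> I \<Longrightarrow> (y, z) \<in> I \<Longrightarrow> (x, z) \<in> I"
    and ct: "\<And>x y z. (x, z) \<in> I \<Longrightarrow> x < y \<Longrightarrow> y < z \<Longrightarrow> (x, y) \<in> I \<or> (y, z) \<in> I"
    using assms(1) unfolding inversion_set_def trans_def cotrans_def by blast+
  consider "a < c" | "a = c" | "c < a" by linarith
  then show ?thesis
    using assms(2,3) t ct unfolding value_less_def by cases (blast dest: less_trans)+
qed

lemma value_less_irrefl: "\<not> value_less I i i"
  unfolding value_less_def by auto

text \<open>Ranking the positions by \<open>value_less I\<close> recovers a permutation from its inversion set,
  and turns every transitive and co-transitive \<open>I\<close> into a permutation with inversion set \<open>I\<close>.\<close>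
definition value_rank :: "nat \<Rightarrow> (nat \<times> nat) set \<Rightarrow> nat \<Rightarrow> nat" where
  "value_rank k I i = Suc (card {j \<in> {1..k}. value_less I j i})"

definition rank_perm :: "nat \<Rightarrow> (nat \<times> nat) set \<Rightarrow> nat list" where
  "rank_perm k I = map (value_rank k I) [1..<k+1]"

lemma length_rank_perm [simp]: "length (rank_perm k I) = k"
  unfolding rank_perm_def by (simp del: upt_Suc)

lemma rank_perm_nth: "1 \<le> i \<Longrightarrow> i \<le> k \<Longrightarrow> rank_perm k I ! (i - 1) = value_rank k I i"
  unfolding rank_perm_def by (simp add: nth_upt del: upt_Suc)

lemma perms_nth_eq_card_less:
  assumes "\<sigma> \<in> perms k" "1 \<le> i" "i \<le> k"
  shows "\<sigma> ! (i - 1) = Suc (card {j \<in> {1..k}. \<sigma> ! (j - 1) < \<sigma> ! (i - 1)})"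
proof -
  let ?v = "\<sigma> ! (i - 1)" and ?S = "{j \<in> {1..k}. \<sigma> ! (j - 1) < \<sigma> ! (i - 1)}"
  have v: "?v \<in> {1..k}" using perms_nth_mem[OF assms] .
  have "inj_on (\<lambda>j. \<sigma> ! (j - 1)) ?S"
    using perms_nth_eq_iff[OF assms(1)] by (auto simp: inj_on_def)
  moreover have "(\<lambda>j. \<sigma> ! (j - 1)) ` ?S = {1..<?v}"
  proof
    show "(\<lambda>j. \<sigma> ! (j - 1)) ` ?S \<subseteq> {1..<?v}"
      using perms_nth_mem[OF assms(1)] by fastforce
    show "{1..<?v} \<subseteq> (\<lambda>j. \<sigma> ! (j - 1)) ` ?S"
    proof
      fix x assume x: "x \<in> {1..<?v}"
      with v obtain j where "1 \<le> j" "j \<le> k" "\<sigma> ! (j - 1) = x"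
        using perms_nth_surj[OF assms(1), of x] by auto
      with x show "x \<in> (\<lambda>j. \<sigma> ! (j - 1)) ` ?S" by force
    qed
  qed
  ultimately have "card ?S = card {1..<?v}" using card_image by fastforce
  with v show ?thesis by simp
qed

lemma rank_perm_perm_Inv:
  assumes \<sigma>: "\<sigma> \<in> perms k"
  shows "rank_perm k (perm_Inv \<sigma>) = \<sigma>"
proof (rule nth_equalityI)
  show "length (rank_perm k (perm_Inv \<sigma>)) = length \<sigma>" by (simp add: perms_length[OF \<sigma>])
  fix p assume "p < length (rank_perm k (perm_Inv \<sigma>))"
  then have p: "1 \<le> Suc p" "Suc p \<le> k" by simp_all
  have "{j \<in> {1..k}. value_less (perm_Inv \<sigma>) j (Suc p)} = {j \<in> {1..k}. \<sigma> ! (j - 1) < \<sigma> ! (Suc p - 1)}"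
    using value_less_perm_Inv[OF \<sigma> p] by auto
  then show "rank_perm k (perm_Inv \<sigma>) ! p = \<sigma> ! p"
    using rank_perm_nth[OF p] perms_nth_eq_card_less[OF \<sigma> p] unfolding value_rank_def by simp
qed

lemma perm_Inv_inj_on: "inj_on perm_Inv (perms k)"
  by (rule inj_on_inverseI[where g = "rank_perm k"]) (rule rank_perm_perm_Inv)

lemma value_rank_mono:
  assumes "inversion_set k I" "value_less I a b" "a \<in> {1..k}"
  shows "value_rank k I a < value_rank k I b"
proof -
  have "{j \<in> {1..k}. value_less I j a} \<subset> {j \<in> {1..k}. value_less I j b}"
    using value_less_trans[OF assms(1) _ assms(2)] assms(2,3) value_less_irrefl by blast
  then show ?thesis unfolding value_rank_def by (simp add: psubset_card_mono)
qed

lemma value_rank_range: "i \<in> {1..k} \<Longrightarrow> value_rank k I i \<in> {1..k}"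
proof -
  assume i: "i \<in> {1..k}"
  have "{j \<in> {1..k}. value_less I j i} \<subseteq> {1..k} - {i}" using value_less_irrefl by auto
  then have "card {j \<in> {1..k}. value_less I j i} \<le> card ({1..k} - {i})" by (intro card_mono) auto
  with i show ?thesis unfolding value_rank_def by auto
qed

lemma rank_perm_perms:
  assumes "inversion_set k I"
  shows "rank_perm k I \<in> perms k"
proof -
  have "inj_on (value_rank k I) {1..k}"
  proof (rule inj_onI)
    fix a b assume "a \<in> {1..k}" "b \<in> {1..k}" "value_rank k I a = value_rank k I b"
    moreover have "a \<noteq> b \<Longrightarrow> value_less I a b \<or> value_less I b a" unfolding value_less_def by auto
    ultimately show "a = b" using value_rank_mono[OF assms, of a b] value_rank_mono[OF assms, of b a] by auto
  qed
  moreover have upt: "set [1..<k+1] = {1..k}" by auto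
  ultimately have "distinct (rank_perm k I)" unfolding rank_perm_def distinct_map by simp
  moreover have "set (rank_perm k I) \<subseteq> {1..k}"
    unfolding rank_perm_def set_map upt using value_rank_range by auto
  ultimately show ?thesis unfolding perms_def by (simp add: card_subset_eq distinct_card)
qed

lemma perm_Inv_rank_perm:
  assumes "inversion_set k I"
  shows "perm_Inv (rank_perm k I) = I"
proof
  note \<sigma> = rank_perm_perms[OF assms]
  show "perm_Inv (rank_perm k I) \<subseteq> I"
  proof
    fix x assume "x \<in> perm_Inv (rank_perm k I)"
    then obtain i j where x: "x = (i, j)" "1 \<le> i" "i < j" "j \<le> k" "value_rank k I j < value_rank k I i"
      unfolding perm_Inv_perms[OF \<sigma>] using rank_perm_nth by auto
    then have "\<not> value_less I i j" using value_rank_mono[OF assms, of i j] by force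
    with x show "x \<in> I" unfolding value_less_def by auto
  qed
  show "I \<subseteq> perm_Inv (rank_perm k I)"
  proof
    fix x assume x: "x \<in> I"
    then obtain i j where ij: "x = (i, j)" "1 \<le> i" "i < j" "j \<le> k"
      using assms unfolding inversion_set_def pairs_upto_def by auto
    with x have "value_less I j i" unfolding value_less_def by auto
    with ij have "value_rank k I j < value_rank k I i" using value_rank_mono[OF assms] by auto
    with ij show "x \<in> perm_Inv (rank_perm k I)" unfolding perm_Inv_perms[OF \<sigma>] using rank_perm_nth by auto
  qed
qed

lemma inversion_set_obtains_perm:
  assumes "inversion_set k I"
  obtains \<sigma> where "\<sigma> \<in> perms k" "perm_Inv \<sigma> = I"
  using rank_perm_perms[OF assms] perm_Inv_rank_perm[OF assms] by blast

section \<open>Joins and meets in the weak order\<close>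

lemma cotrans_trancl_Un:
  assumes "cotrans I" "cotrans J"
  shows "cotrans ((I \<union> J)\<^sup>+)"
proof -
  have cotrans_Un: "cotrans (I \<union> J)" using assms(1,2) unfolding cotrans_def by blast
  have "\<forall>b. a < b \<and> b < c \<longrightarrow> (a, b) \<in> (I \<union> J)\<^sup>+ \<or> (b, c) \<in> (I \<union> J)\<^sup>+"
    if "(a, c) \<in> (I \<union> J)\<^sup>+" for a c
    using that
  proof (induction rule: trancl_induct)
    case (base y)
    then show ?case using cotrans_Un unfolding cotrans_def by blast
  next
    case (step y z)
    show ?case
    proof (intro allI impI)
      fix b assume b: "a < b \<and> b < z"
      consider "b < y" | "b = y" | "y < b" by linarith
      then show "(a, b) \<in> (I \<union> J)\<^sup>+ \<or> (b, z) \<in> (I \<union> J)\<^sup>+"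
      proof cases
        case 1
        then show ?thesis using step b by (meson trancl.simps)
      next
        case 2
        then show ?thesis using step by auto
      next
        case 3
        then have "(y, b) \<in> I \<union> J \<or> (b, z) \<in> I \<union> J"
          using cotrans_Un step(2) b unfolding cotrans_def by blast
        then show ?thesis using step(1) by (meson r_into_trancl' trancl.trancl_into_trancl)
      qed
    qed
  qed
  then show ?thesis unfolding cotrans_def by blast
qed

lemma inversion_set_trancl_Un:
  assumes "inversion_set k I" "inversion_set k J"
  shows "inversion_set k ((I \<union> J)\<^sup>+)"
proof -
  have sub: "I \<union> J \<subseteq> pairs_upto k" and "cotrans I" "cotrans J"
    using assms unfolding inversion_set_def by blast+
  then show ?thesis
    unfolding inversion_set_def
    using trancl_subset_trans[OF sub trans_pairs_upto] cotrans_trancl_Un trans_trancl by blast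
qed

lemma inversion_set_Diff:
  assumes "inversion_set k I"
  shows "inversion_set k (pairs_upto k - I)"
proof -
  have t: "\<And>x y z. (x, y) \<in> I \<Longrightarrow> (y, z) \<in> I \<Longrightarrow> (x, z) \<in> I"
    and ct: "\<And>x y z. (x, z) \<in> I \<Longrightarrow> x < y \<Longrightarrow> y < z \<Longrightarrow> (x, y) \<in> I \<or> (y, z) \<in> I"
    using assms unfolding inversion_set_def trans_def cotrans_def by blast+
  have "(x, z) \<in> pairs_upto k - I"
    if "(x, y) \<in> pairs_upto k - I" "(y, z) \<in> pairs_upto k - I" for x y z
  proof -
    from that have "x < y" "y < z" "(x, z) \<in> pairs_upto k" unfolding pairs_upto_def by auto
    with that ct show ?thesis by blast
  qed
  moreover have "(i, j) \<in> pairs_upto k - I \<or> (j, l) \<in> pairs_upto k - I"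
    if "(i, l) \<in> pairs_upto k - I" "i < j" "j < l" for i j l
  proof -
    from that have "(i, j) \<in> pairs_upto k" "(j, l) \<in> pairs_upto k" unfolding pairs_upto_def by auto
    with that t show ?thesis by blast
  qed
  ultimately show ?thesis unfolding inversion_set_def trans_def cotrans_def by blast
qed

lemma trans_perm_Inv: "\<sigma> \<in> perms k \<Longrightarrow> trans (perm_Inv \<sigma>)"
  using inversion_set_perm_Inv unfolding inversion_set_def by blast

lemma perm_le_antisym:
  "\<sigma> \<in> perms k \<Longrightarrow> \<tau> \<in> perms k \<Longrightarrow> perm_le \<sigma> \<tau> \<Longrightarrow> perm_le \<tau> \<sigma> \<Longrightarrow> \<sigma> = \<tau>"
  unfolding perm_le_def using perm_Inv_inj_on[of k] by (auto dest: inj_onD)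

lemma perm_join_perms:
  assumes "\<sigma> \<in> perms k" "\<tau> \<in> perms k"
  shows "perm_join \<sigma> \<tau> \<in> perms k"
    and "perm_Inv (perm_join \<sigma> \<tau>) = (perm_Inv \<sigma> \<union> perm_Inv \<tau>)\<^sup>+"
    and "is_lub_on perm_le (perms k) \<sigma> \<tau> (perm_join \<sigma> \<tau>)"
proof -
  have "inversion_set k ((perm_Inv \<sigma> \<union> perm_Inv \<tau>)\<^sup>+)"
    using inversion_set_trancl_Un inversion_set_perm_Inv assms by blast
  then obtain \<rho> where \<rho>: "\<rho> \<in> perms k" "perm_Inv \<rho> = (perm_Inv \<sigma> \<union> perm_Inv \<tau>)\<^sup>+"
    by (rule inversion_set_obtains_perm)
  have "(perm_Inv \<sigma> \<union> perm_Inv \<tau>)\<^sup>+ \<subseteq> perm_Inv \<rho>'"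
    if "\<rho>' \<in> perms k" "perm_Inv \<sigma> \<subseteq> perm_Inv \<rho>'" "perm_Inv \<tau> \<subseteq> perm_Inv \<rho>'" for \<rho>'
    using that trancl_subset_trans[OF _ trans_perm_Inv] by (metis Un_least)
  then have lub: "is_lub_on perm_le (perms k) \<sigma> \<tau> \<rho>"
    unfolding is_lub_on_def perm_le_def \<rho>(2) using \<rho>(1) by auto
  have "perm_join \<sigma> \<tau> = \<rho>"
    unfolding perm_join_def perms_length[OF assms(1)]
  proof (rule the_equality)
    show "is_lub_on perm_le (perms k) \<sigma> \<tau> \<rho>" by (rule lub)
    fix \<rho>' assume "is_lub_on perm_le (perms k) \<sigma> \<tau> \<rho>'"
    then show "\<rho>' = \<rho>" by (rule is_lub_on_unique[OF lub]) (auto intro: perm_le_antisym)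
  qed
  with \<rho> lub show "perm_join \<sigma> \<tau> \<in> perms k"
    and "perm_Inv (perm_join \<sigma> \<tau>) = (perm_Inv \<sigma> \<union> perm_Inv \<tau>)\<^sup>+"
    and "is_lub_on perm_le (perms k) \<sigma> \<tau> (perm_join \<sigma> \<tau>)" by simp_all
qed

lemma perm_meet_perms:
  assumes "\<sigma> \<in> perms k" "\<tau> \<in> perms k"
  defines "N \<equiv> pairs_upto k - ((pairs_upto k - perm_Inv \<sigma>) \<union> (pairs_upto k - perm_Inv \<tau>))\<^sup>+"
  shows "perm_meet \<sigma> \<tau> \<in> perms k"
    and "perm_Inv (perm_meet \<sigma> \<tau>) = N"
    and "is_glb_on perm_le (perms k) \<sigma> \<tau> (perm_meet \<sigma> \<tau>)"
proof -
  have "inversion_set k N"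
    unfolding N_def by (intro inversion_set_Diff inversion_set_trancl_Un inversion_set_perm_Inv assms(1,2))
  then obtain \<rho> where \<rho>: "\<rho> \<in> perms k" "perm_Inv \<rho> = N"
    by (rule inversion_set_obtains_perm)
  have "perm_Inv \<rho>' \<subseteq> N"
    if "\<rho>' \<in> perms k" "perm_Inv \<rho>' \<subseteq> perm_Inv \<sigma>" "perm_Inv \<rho>' \<subseteq> perm_Inv \<tau>" for \<rho>'
  proof -
    have "trans (pairs_upto k - perm_Inv \<rho>')"
      using inversion_set_Diff[OF inversion_set_perm_Inv[OF that(1)]] unfolding inversion_set_def by blast
    moreover have "(pairs_upto k - perm_Inv \<sigma>) \<union> (pairs_upto k - perm_Inv \<tau>) \<subseteq> pairs_upto k - perm_Inv \<rho>'"
      using that(2,3) by blast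
    ultimately have "((pairs_upto k - perm_Inv \<sigma>) \<union> (pairs_upto k - perm_Inv \<tau>))\<^sup>+ \<subseteq> pairs_upto k - perm_Inv \<rho>'"
      using trancl_subset_trans by blast
    then show ?thesis unfolding N_def using perm_Inv_subset_pairs_upto[OF that(1)] by blast
  qed
  moreover have "N \<subseteq> perm_Inv \<sigma>" "N \<subseteq> perm_Inv \<tau>" unfolding N_def by auto
  ultimately have glb: "is_glb_on perm_le (perms k) \<sigma> \<tau> \<rho>"
    unfolding is_glb_on_def perm_le_def \<rho>(2) using \<rho>(1) by blast
  have "perm_meet \<sigma> \<tau> = \<rho>"
    unfolding perm_meet_def perms_length[OF assms(1)]
  proof (rule the_equality)
    show "is_glb_on perm_le (perms k) \<sigma> \<tau> \<rho>" by (rule glb)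
    fix \<rho>' assume "is_glb_on perm_le (perms k) \<sigma> \<tau> \<rho>'"
    then show "\<rho>' = \<rho>" by (rule is_glb_on_unique[OF glb]) (auto intro: perm_le_antisym)
  qed
  with \<rho> glb show "perm_meet \<sigma> \<tau> \<in> perms k" and "perm_Inv (perm_meet \<sigma> \<tau>) = N"
    and "is_glb_on perm_le (perms k) \<sigma> \<tau> (perm_meet \<sigma> \<tau>)" by simp_all
qed

lemma trancl_Un_Int_subset:
  assumes "I \<union> J \<subseteq> {(a, b). a < (b::nat)}" "trans I" "trans J" "I \<inter> X = J \<inter> X"
    and X: "\<And>a b c. (a, c) \<in> X \<Longrightarrow> a < b \<Longrightarrow> b < c \<Longrightarrow> (a, b) \<in> X"
  shows "(I \<union> J)\<^sup>+ \<inter> X \<subseteq> I"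
proof -
  have "(a, c) \<in> X \<longrightarrow> (a, c) \<in> I \<and> (a, c) \<in> J" if "(a, c) \<in> (I \<union> J)\<^sup>+" for a c
    using that
  proof (induction rule: trancl_induct)
    case (base y)
    then show ?case using assms(4) by blast
  next
    case (step y z)
    show ?case
    proof
      assume az: "(a, z) \<in> X"
      have "trans {(a, b). a < (b::nat)}" unfolding trans_def by auto
      then have "a < y" using step(1) trancl_subset_trans[OF assms(1)] by blast
      moreover have "y < z" using step(2) assms(1) by auto
      ultimately have "(a, y) \<in> I" "(a, y) \<in> J" using X[OF az] step(3) by auto
      then have "(a, z) \<in> I \<or> (a, z) \<in> J" using step(2) assms(2,3) unfolding trans_def by blast
      then show "(a, z) \<in> I \<and> (a, z) \<in> J" using az assms(4) by blast
    qed
  qed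
  then show ?thesis by auto
qed

lemma perm_Inv_subset_nth_less:
  assumes \<sigma>: "\<sigma> \<in> perms k" and \<tau>: "\<tau> \<in> perms k" and sub: "perm_Inv \<sigma> \<subseteq> perm_Inv \<tau>"
    and "1 \<le> x" "x < y" "y \<le> k" "\<tau> ! (x - 1) < \<tau> ! (y - 1)"
  shows "\<sigma> ! (x - 1) < \<sigma> ! (y - 1)"
proof -
  from assms(4-) have "(x, y) \<notin> perm_Inv \<sigma>"
    using sub unfolding perm_Inv_perms[OF \<sigma>] perm_Inv_perms[OF \<tau>] by auto
  with assms(4-) show ?thesis
    using perms_nth_eq_iff[OF \<sigma>, of x y] unfolding perm_Inv_perms[OF \<sigma>] by auto
qed

text \<open>If \<open>\<sigma> < \<tau>\<close> in the weak order, an inversion of \<open>\<tau>\<close> missing in \<open>\<sigma>\<close> with minimal value gap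
  has gap one: the position carrying the value just above the smaller one yields a smaller gap.\<close>
lemma perm_Inv_Diff_smaller_gap:
  assumes \<sigma>: "\<sigma> \<in> perms k" and \<tau>: "\<tau> \<in> perms k" and sub: "perm_Inv \<sigma> \<subseteq> perm_Inv \<tau>"
    and ij: "(i, j) \<in> perm_Inv \<tau> - perm_Inv \<sigma>" and gap: "Suc (\<tau> ! (j - 1)) < \<tau> ! (i - 1)"
  shows "\<exists>i' j'. (i', j') \<in> perm_Inv \<tau> - perm_Inv \<sigma> \<and>
    \<tau> ! (i' - 1) - \<tau> ! (j' - 1) < \<tau> ! (i - 1) - \<tau> ! (j - 1)"
proof (rule ccontr)
  define s t where "s x = \<sigma> ! (x - 1)" and "t x = \<tau> ! (x - 1)" for x
  assume none: "\<not> ?thesis"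
  have smaller: "s y < s x"
    if "1 \<le> x" "x < y" "y \<le> k" "t y < t x" "t x - t y < t i - t j" for x y
  proof (rule ccontr)
    assume "\<not> s y < s x"
    with that have "(x, y) \<in> perm_Inv \<tau> - perm_Inv \<sigma>"
      unfolding perm_Inv_perms[OF \<sigma>] perm_Inv_perms[OF \<tau>] s_def t_def by auto
    with that(5) none show False unfolding t_def by blast
  qed
  have larger: "s x < s y" if "1 \<le> x" "x < y" "y \<le> k" "t x < t y" for x y
    using perm_Inv_subset_nth_less[OF \<sigma> \<tau> sub, of x y] that unfolding s_def t_def by blast
  have ij': "1 \<le> i" "i < j" "j \<le> k" "t j < t i" "s i < s j"
    using ij perms_nth_eq_iff[OF \<sigma>, of i j]
    unfolding perm_Inv_perms[OF \<sigma>] perm_Inv_perms[OF \<tau>] s_def t_def by (auto simp: not_less_iff_gr_or_eq)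
  have gap': "Suc (t j) < t i" using gap unfolding t_def .
  then have "Suc (t j) \<in> {1..k}" using perms_nth_mem[OF \<tau>, of i] ij' unfolding t_def by auto
  then obtain l where l: "1 \<le> l" "l \<le> k" "t l = Suc (t j)"
    using perms_nth_surj[OF \<tau>] unfolding t_def by metis
  have lj: "t j < t l" "t l - t j < t i - t j" and il: "t l < t i" "t i - t l < t i - t j"
    using l gap' by auto
  consider "l < i" | "i < l" "l < j" | "j < l" using l gap' by (metis lessI less_irrefl nat_neq_iff)
  then show False
  proof cases
    case 1
    then have "s j < s l" "s l < s i" using smaller[of l j] larger[of l i] l ij' lj il by auto
    with ij' show False by simp
  next
    case 2
    then have "s l < s i" "s j < s l" using smaller[of i l] smaller[of l j] l ij' lj il by auto
    with ij' show False by simp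
  next
    case 3
    then have "s l < s i" "s j < s l" using smaller[of i l] larger[of j l] l ij' lj il by auto
    with ij' show False by simp
  qed
qed

lemma perm_Inv_psubset_obtains_adjacent:
  assumes \<sigma>: "\<sigma> \<in> perms k" and \<tau>: "\<tau> \<in> perms k" and psub: "perm_Inv \<sigma> \<subset> perm_Inv \<tau>"
  obtains i j where "(i, j) \<in> perm_Inv \<tau> - perm_Inv \<sigma>" "\<tau> ! (i - 1) = Suc (\<tau> ! (j - 1))"
proof -
  have "\<exists>i' j'. (i', j') \<in> perm_Inv \<tau> - perm_Inv \<sigma> \<and> \<tau> ! (i' - 1) = Suc (\<tau> ! (j' - 1))"
    if "(i, j) \<in> perm_Inv \<tau> - perm_Inv \<sigma>" for i j
    using that
  proof (induction "\<tau> ! (i - 1) - \<tau> ! (j - 1)" arbitrary: i j rule: less_induct)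
    case less
    show ?case
    proof (cases "Suc (\<tau> ! (j - 1)) < \<tau> ! (i - 1)")
      case True
      with less.prems obtain i' j' where "(i', j') \<in> perm_Inv \<tau> - perm_Inv \<sigma>"
        "\<tau> ! (i' - 1) - \<tau> ! (j' - 1) < \<tau> ! (i - 1) - \<tau> ! (j - 1)"
        using perm_Inv_Diff_smaller_gap[OF \<sigma> \<tau>] psub by blast
      then show ?thesis using less.hyps by blast
    next
      case False
      moreover have "\<tau> ! (j - 1) < \<tau> ! (i - 1)" using less.prems unfolding perm_Inv_perms[OF \<tau>] by auto
      ultimately show ?thesis using less.prems by (intro exI[of _ i] exI[of _ j]) auto
    qed
  qed
  moreover obtain i j where "(i, j) \<in> perm_Inv \<tau> - perm_Inv \<sigma>" using psub by auto
  ultimately show thesis using that by blast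
qed

lemma T_eq_map_transpose: "T a = map (transpose a (Suc a))"
  unfolding T_def transpose_def by auto

lemma T_T [simp]: "T a (T a w) = w"
  unfolding T_eq_map_transpose by (simp add: map_idI)

lemma T_perms:
  assumes "\<sigma> \<in> perms k" "1 \<le> a" "a < k"
  shows "T a \<sigma> \<in> perms k"
proof -
  have "transpose a (Suc a) ` {1..k} = {1..k}"
    using assms(2,3) by (intro transpose_image_eq) auto
  then show ?thesis
    using assms(1) unfolding perms_def T_eq_map_transpose by (auto simp: distinct_map inj_on_transpose)
qed

lemma transpose_less_transpose_iff:
  "x \<noteq> y \<Longrightarrow> transpose a (Suc a) y < transpose a (Suc a) x \<longleftrightarrow>
    (if {x, y} = {a, Suc a} then x < y else y < x)"
  unfolding transpose_def by (auto simp: doubleton_eq_iff)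

lemma perm_Inv_T:
  assumes \<sigma>: "\<sigma> \<in> perms k" and "1 \<le> i" "i < j" "j \<le> k"
    and "\<sigma> ! (i - 1) = Suc a" "\<sigma> ! (j - 1) = a"
  shows "perm_Inv (T a \<sigma>) = perm_Inv \<sigma> - {(i, j)}"
proof -
  have a: "1 \<le> a" "a < k" using perms_nth_mem[OF \<sigma>, of j] perms_nth_mem[OF \<sigma>, of i] assms by auto
  have \<sigma>': "T a \<sigma> \<in> perms k" using T_perms[OF \<sigma> a] .
  have nth: "T a \<sigma> ! (p - 1) = transpose a (Suc a) (\<sigma> ! (p - 1))" if "1 \<le> p" "p \<le> k" for p
    using that perms_length[OF \<sigma>] unfolding T_eq_map_transpose by simp
  have "transpose a (Suc a) (\<sigma> ! (p - 1)) > transpose a (Suc a) (\<sigma> ! (q - 1)) \<longleftrightarrow>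
      \<sigma> ! (p - 1) > \<sigma> ! (q - 1) \<and> (p, q) \<noteq> (i, j)"
    if "1 \<le> p" "p < q" "q \<le> k" for p q
  proof -
    have "\<sigma> ! (p - 1) \<noteq> \<sigma> ! (q - 1)" using perms_nth_eq_iff[OF \<sigma>, of p q] that by auto
    moreover have "{\<sigma> ! (p - 1), \<sigma> ! (q - 1)} = {a, Suc a} \<longleftrightarrow> (p, q) = (i, j)"
      using perms_nth_eq_iff[OF \<sigma>, of p i] perms_nth_eq_iff[OF \<sigma>, of p j]
        perms_nth_eq_iff[OF \<sigma>, of q i] perms_nth_eq_iff[OF \<sigma>, of q j] that assms
      by (auto simp: doubleton_eq_iff)
    ultimately show ?thesis using assms(5,6) by (auto simp: transpose_less_transpose_iff)
  qed
  then show ?thesis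
    unfolding perm_Inv_perms[OF \<sigma>'] perm_Inv_perms[OF \<sigma>] using nth assms(2-4) by auto
qed

lemma perm_Inv_T_cases:
  assumes \<sigma>: "\<sigma> \<in> perms k" and a: "1 \<le> a" "a < k"
  obtains i j where "(i, j) \<in> perm_Inv \<sigma>" "perm_Inv (T a \<sigma>) = perm_Inv \<sigma> - {(i, j)}"
    | i j where "(i, j) \<in> perm_Inv (T a \<sigma>)" "perm_Inv \<sigma> = perm_Inv (T a \<sigma>) - {(i, j)}"
proof -
  obtain p where p: "1 \<le> p" "p \<le> k" "\<sigma> ! (p - 1) = Suc a" using perms_nth_surj[OF \<sigma>, of "Suc a"] a by auto
  obtain q where q: "1 \<le> q" "q \<le> k" "\<sigma> ! (q - 1) = a" using perms_nth_surj[OF \<sigma>, of a] a by auto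
  have "p \<noteq> q" using p q by auto
  then consider "p < q" | "q < p" by linarith
  then show thesis
  proof cases
    case 1
    then have "(p, q) \<in> perm_Inv \<sigma>" unfolding perm_Inv_perms[OF \<sigma>] using p q by auto
    then show thesis by (rule that(1)) (rule perm_Inv_T[OF \<sigma> p(1) 1 q(2) p(3) q(3)])
  next
    case 2
    have \<sigma>': "T a \<sigma> \<in> perms k" using T_perms[OF \<sigma> a] .
    have q': "T a \<sigma> ! (q - 1) = Suc a" and p': "T a \<sigma> ! (p - 1) = a"
      using p q perms_length[OF \<sigma>] unfolding T_def by auto
    then have "(q, p) \<in> perm_Inv (T a \<sigma>)" unfolding perm_Inv_perms[OF \<sigma>'] using p q 2 by auto
    moreover have "perm_Inv (T a (T a \<sigma>)) = perm_Inv (T a \<sigma>) - {(q, p)}"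
      by (rule perm_Inv_T[OF \<sigma>' q(1) 2 p(2) q' p'])
    ultimately show thesis using that(2) by simp
  qed
qed

lemma packed_T_perm:
  assumes \<sigma>: "\<sigma> \<in> perms k" and "packed (T a \<sigma>)" "T a \<sigma> \<noteq> \<sigma>"
  shows "1 \<le> a \<and> a < k"
proof -
  have "map (transpose a (Suc a)) \<sigma> \<noteq> \<sigma>" using assms(3) unfolding T_eq_map_transpose .
  then obtain x where x: "x \<in> set \<sigma>" "transpose a (Suc a) x \<noteq> x"
    using map_idI[of \<sigma> "transpose a (Suc a)"] by blast
  have set_T: "set (T a \<sigma>) = transpose a (Suc a) ` {1..k}"
    using \<sigma> unfolding perms_def T_eq_map_transpose by simp
  obtain m where "set (T a \<sigma>) = {1..m}" using assms(2) unfolding packed_def by blast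
  moreover have "card (set (T a \<sigma>)) = k" unfolding set_T by (simp add: card_image)
  ultimately have "set (T a \<sigma>) = {1..k}" by simp
  then have "transpose a (Suc a) x \<in> {1..k}" "x \<in> {1..k}"
    using x \<sigma> unfolding set_T perms_def by auto
  with x(2) show "1 \<le> a \<and> a < k" unfolding transpose_def by (auto split: if_splits)
qed

lemma setpar_T: "setpar (T a w) = setpar w"
proof -
  have "fibre (T a w) (transpose a (Suc a) b) = fibre w b" for b
    unfolding fibre_def T_eq_map_transpose by (auto simp: transpose_eq_iff)
  then show ?thesis
    unfolding setpar_def T_eq_map_transpose by (auto simp: transpose_eq_iff)
qed

lemma pcoverD:
  assumes "pcover n u w"
  shows "card (iInv u) < card (iInv w)" "setpar u = setpar w" "u \<in> PW n" "w \<in> PW n"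
proof -
  from assms obtain a where "u = T a w" "card (iInv w) = card (iInv u) + 1" "u \<in> PW n" "w \<in> PW n"
    unfolding pcover_def by blast
  then show "card (iInv u) < card (iInv w)" "setpar u = setpar w" "u \<in> PW n" "w \<in> PW n"
    by (simp_all add: setpar_T)
qed

lemma tranclp_pcoverD:
  assumes "(pcover n)\<^sup>+\<^sup>+ u w"
  shows "card (iInv u) < card (iInv w)" "setpar u = setpar w" "u \<in> PW n" "w \<in> PW n"
  using assms by (induction rule: tranclp_induct) (use pcoverD in fastforce)+

lemma pcover_imp_hasse:
  assumes "pcover n u w" shows "hasse n u w"
proof -
  have card: "card (iInv w) = card (iInv u) + 1" using assms unfolding pcover_def by blast
  have "pwo_lt n u w" unfolding pwo_lt_def pwo_le_def using assms card by auto
  moreover have "\<not> (pwo_lt n u z \<and> pwo_lt n z w)" for z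
    using tranclp_pcoverD(1)[of n u z] tranclp_pcoverD(1)[of n z w] card
    unfolding pwo_lt_def pwo_le_def by auto
  ultimately show ?thesis unfolding hasse_def by blast
qed

lemma hasse_imp_tranclp_pcover: "hasse n u w \<Longrightarrow> (pcover n)\<^sup>+\<^sup>+ u w"
  unfolding hasse_def pwo_lt_def pwo_le_def by auto

lemma pconn_eq: "pconn n = (symclp (hasse n))\<^sup>*\<^sup>*"
  unfolding pconn_def symclp_def ..

lemma pconn_sym: "pconn n u w \<Longrightarrow> pconn n w u"
  unfolding pconn_eq by (rule sympD[OF symp_rtranclp_symclp])

lemma pconn_trans: "pconn n u v \<Longrightarrow> pconn n v w \<Longrightarrow> pconn n u w"
  unfolding pconn_def by (rule rtranclp_trans)

lemma pcover_imp_pconn: "pcover n u w \<Longrightarrow> pconn n u w"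
  unfolding pconn_eq by (intro r_into_rtranclp symclpI1 pcover_imp_hasse)

lemma tranclp_pcover_imp_pconn: "(pcover n)\<^sup>+\<^sup>+ u w \<Longrightarrow> pconn n u w"
  by (induction rule: tranclp_induct) (auto intro: pconn_trans pcover_imp_pconn)

lemma pwo_le_imp_pconn: "pwo_le n u w \<Longrightarrow> pconn n u w"
  unfolding pwo_le_def using tranclp_pcover_imp_pconn by (auto simp: pconn_def)

lemma pwo_le_pcover_trans: "pwo_le n u v \<Longrightarrow> pcover n v w \<Longrightarrow> pwo_le n u w"
  unfolding pwo_le_def by (auto intro: tranclp.trancl_into_trancl)

lemma finite_fibre: "finite (fibre u a)"
  unfolding fibre_def by simp

lemma fibre_nonempty: "a \<in> set u \<Longrightarrow> fibre u a \<noteq> {}"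
proof -
  assume "a \<in> set u"
  then obtain q where "q < length u" "u ! q = a" by (auto simp: in_set_conv_nth)
  then have "Suc q \<in> fibre u a" unfolding fibre_def by auto
  then show ?thesis by auto
qed

lemma setpar_disjoint: "B \<in> setpar u \<Longrightarrow> B' \<in> setpar u \<Longrightarrow> B \<noteq> B' \<Longrightarrow> B \<inter> B' = {}"
  unfolding setpar_def fibre_def by auto

lemma Union_setpar: "\<Union>(setpar u) = {1..length u}"
proof
  show "\<Union>(setpar u) \<subseteq> {1..length u}" unfolding setpar_def fibre_def by auto
  show "{1..length u} \<subseteq> \<Union>(setpar u)"
  proof
    fix p assume "p \<in> {1..length u}"
    then have "p \<in> fibre u (u ! (p - 1))" "u ! (p - 1) \<in> set u" unfolding fibre_def by auto
    then show "p \<in> \<Union>(setpar u)" unfolding setpar_def by blast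
  qed
qed

lemma inj_on_Min_setpar: "inj_on Min (setpar u)"
proof (rule inj_onI)
  fix B B' assume B: "B \<in> setpar u" "B' \<in> setpar u" "Min B = Min B'"
  then have "B \<noteq> {}" "B' \<noteq> {}" "finite B" "finite B'"
    unfolding setpar_def using fibre_nonempty finite_fibre by auto
  then have "Min B \<in> B \<inter> B'" using B(3) Min_in by (metis IntI)
  then show "B = B'" using setpar_disjoint B(1,2) by blast
qed

lemma PW_obtains_ordered_partition:
  assumes "u \<in> PW n"
  obtains Bs where "ordered_partition n Bs" "set Bs = setpar u"
proof -
  interpret folding_insort_key "(\<le>)" "(<)" "setpar u" Min
    by unfold_locales (rule inj_on_Min_setpar)
  have "finite (setpar u)" unfolding setpar_def by simp
  then obtain Bs where Min_sorted: "sorted_wrt (<) (map Min Bs)" and set_Bs: "set Bs = setpar u"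
    by (rule finite_set_strict_sorted[OF order_refl])
  have Min_less: "Min (Bs ! i) < Min (Bs ! j)" if "i < j" "j < length Bs" for i j
    using Min_sorted that by (simp add: sorted_wrt_iff_nth_less)
  have "ordered_partition n Bs"
    unfolding ordered_partition_def
  proof (intro conjI allI impI)
    show "\<forall>B\<in>set Bs. B \<noteq> {}" unfolding set_Bs setpar_def using fibre_nonempty by auto
    show "\<Union>(set Bs) = {1..n}" using assms Union_setpar unfolding set_Bs PW_def by simp
    fix i j
    show "Bs ! i \<inter> Bs ! j = {}" if "i < length Bs \<and> j < length Bs \<and> i \<noteq> j"
      using that Min_less[of i j] Min_less[of j i] setpar_disjoint nth_mem set_Bs
      by (metis less_irrefl nat_neq_iff)
    show "Min (Bs ! i) < Min (Bs ! j)" if "i < j \<and> j < length Bs"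
      using that Min_less by blast
  qed
  then show thesis using set_Bs by (rule that)
qed

section \<open>Packed words with a fixed set partition\<close>

lemma setcompr_lessThan_cong:
  "(\<And>i. i < k \<Longrightarrow> f i = g i) \<Longrightarrow> {f i | i. i < k} = {g i | i. i < (k::nat)}"
  by (metis (no_types, lifting))

locale ordered_blocks =
  fixes n :: nat and Bs :: "nat set list"
  assumes ordered_partition: "ordered_partition n Bs"
begin

abbreviation k :: nat where "k \<equiv> length Bs"

lemma block_nonempty: "i < k \<Longrightarrow> Bs ! i \<noteq> {}"
  and block_subset: "i < k \<Longrightarrow> Bs ! i \<subseteq> {1..n}"
  and blocks_Union: "\<Union>(set Bs) = {1..n}"
  and blocks_disjoint: "i < k \<Longrightarrow> j < k \<Longrightarrow> i \<noteq> j \<Longrightarrow> Bs ! i \<inter> Bs ! j = {}"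
  and block_Min_less: "i < j \<Longrightarrow> j < k \<Longrightarrow> Min (Bs ! i) < Min (Bs ! j)"
  using ordered_partition unfolding ordered_partition_def by (auto simp: nth_mem)

lemma finite_block: "i < k \<Longrightarrow> finite (Bs ! i)"
  using block_subset finite_subset by blast

lemma block_Min_in: "i < k \<Longrightarrow> Min (Bs ! i) \<in> Bs ! i"
  and block_Max_in: "i < k \<Longrightarrow> Max (Bs ! i) \<in> Bs ! i"
  using finite_block block_nonempty by auto

lemma block_Min_le_Max: "i < k \<Longrightarrow> Min (Bs ! i) \<le> Max (Bs ! i)"
  using finite_block block_nonempty by auto

lemma block_Min_less_iff: "i < k \<Longrightarrow> j < k \<Longrightarrow> Min (Bs ! i) < Min (Bs ! j) \<longleftrightarrow> i < j"
  using block_Min_less by (metis less_asym nat_neq_iff)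

definition block_of :: "nat \<Rightarrow> nat" where
  "block_of p = (THE i. i < k \<and> p \<in> Bs ! i)"

lemma block_of_eq: "i < k \<Longrightarrow> p \<in> Bs ! i \<Longrightarrow> block_of p = i"
  unfolding block_of_def using blocks_disjoint by (intro the_equality) blast+

lemma block_of: "p \<in> {1..n} \<Longrightarrow> block_of p < k \<and> p \<in> Bs ! block_of p"
  using blocks_Union block_of_eq by (metis UnionE in_set_conv_nth)

lemma pw_eq: "pw Bs \<sigma> = map (\<lambda>p. \<sigma> ! block_of p) [1..<n+1]"
  unfolding pw_def blocks_Union block_of_def by simp

lemma length_pw [simp]: "length (pw Bs \<sigma>) = n"
  unfolding pw_eq by simp

lemma pw_nth: "1 \<le> p \<Longrightarrow> p \<le> n \<Longrightarrow> pw Bs \<sigma> ! (p - 1) = \<sigma> ! block_of p"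
  unfolding pw_eq by (subst nth_map) (auto simp del: upt_Suc simp add: nth_upt)

lemma pw_nth_block: "i < k \<Longrightarrow> p \<in> Bs ! i \<Longrightarrow> pw Bs \<sigma> ! (p - 1) = \<sigma> ! i"
  using pw_nth[of p] block_of_eq block_subset by force

lemma set_pw:
  assumes "length \<sigma> = k" shows "set (pw Bs \<sigma>) = set \<sigma>"
proof
  show "set (pw Bs \<sigma>) \<subseteq> set \<sigma>"
    unfolding pw_eq using block_of assms by auto
  show "set \<sigma> \<subseteq> set (pw Bs \<sigma>)"
  proof
    fix x assume "x \<in> set \<sigma>"
    then obtain i where i: "i < k" "\<sigma> ! i = x" using assms by (auto simp: in_set_conv_nth)
    let ?p = "Min (Bs ! i)"
    have "?p \<in> {1..n}" using block_Min_in[OF i(1)] block_subset[OF i(1)] by auto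
    moreover have "pw Bs \<sigma> ! (?p - 1) = x" using pw_nth_block[OF i(1) block_Min_in[OF i(1)]] i by simp
    ultimately show "x \<in> set (pw Bs \<sigma>)"
      by (metis atLeastAtMost_iff diff_less length_pw less_le_trans nth_mem zero_less_one)
  qed
qed

lemma fibre_pw:
  assumes "\<sigma> \<in> perms k" "i < k"
  shows "fibre (pw Bs \<sigma>) (\<sigma> ! i) = Bs ! i"
proof -
  have "\<sigma> ! block_of p = \<sigma> ! i \<longleftrightarrow> block_of p = i" if "p \<in> {1..n}" for p
    using block_of[OF that] assms unfolding perms_def by (auto simp: nth_eq_iff_index_eq)
  then have "fibre (pw Bs \<sigma>) (\<sigma> ! i) = {p \<in> {1..n}. block_of p = i}"
    unfolding fibre_def using pw_nth by auto
  also have "\<dots> = Bs ! i"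
    using block_of block_of_eq[OF assms(2)] block_subset[OF assms(2)] by blast
  finally show ?thesis .
qed

lemma pw_PW: "\<sigma> \<in> perms k \<Longrightarrow> pw Bs \<sigma> \<in> PW n"
  using set_pw unfolding PW_def packed_def perms_def by auto

lemma setpar_pw:
  assumes "\<sigma> \<in> perms k" shows "setpar (pw Bs \<sigma>) = set Bs"
proof -
  have "setpar (pw Bs \<sigma>) = {fibre (pw Bs \<sigma>) (\<sigma> ! i) | i. i < k}"
    unfolding setpar_def set_pw[OF perms_length[OF assms]]
    using perms_length[OF assms] by (auto simp: in_set_conv_nth)
  also have "\<dots> = {Bs ! i | i. i < k}" by (rule setcompr_lessThan_cong) (rule fibre_pw[OF assms])
  also have "\<dots> = set Bs" by (auto simp: in_set_conv_nth)
  finally show ?thesis .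
qed

lemma firsts_pw:
  assumes "\<sigma> \<in> perms k" shows "firsts (pw Bs \<sigma>) = map (\<lambda>i. Min (Bs ! i)) [0..<k]"
proof -
  let ?ms = "map (\<lambda>i. Min (Bs ! i)) [0..<k]"
  have "{Min (fibre (pw Bs \<sigma>) a) | a. a \<in> set (pw Bs \<sigma>)} = {Min (fibre (pw Bs \<sigma>) (\<sigma> ! i)) | i. i < k}"
    unfolding set_pw[OF perms_length[OF assms]] using perms_length[OF assms] by (auto simp: in_set_conv_nth)
  also have "\<dots> = {Min (Bs ! i) | i. i < k}" by (rule setcompr_lessThan_cong) (simp add: fibre_pw[OF assms])
  also have "\<dots> = set ?ms" by auto
  finally have firsts: "{Min (fibre (pw Bs \<sigma>) a) | a. a \<in> set (pw Bs \<sigma>)} = set ?ms" .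
  have "sorted_wrt (<) ?ms"
    unfolding sorted_wrt_map by (auto simp: sorted_wrt_iff_nth_less block_Min_less)
  then show ?thesis
    unfolding firsts_def firsts
    by (metis sorted_list_of_set_sort_remdups strict_sorted_iff distinct_remdups_id sorted_sort_id)
qed

lemma delrpt_pw:
  assumes "\<sigma> \<in> perms k" shows "delrpt (pw Bs \<sigma>) = \<sigma>"
  using pw_nth_block[OF _ block_Min_in] perms_length[OF assms]
  by (intro nth_equalityI) (auto simp: delrpt_def firsts_pw[OF assms])

lemma Inv_pw: "\<sigma> \<in> perms k \<Longrightarrow> Inv (pw Bs \<sigma>) = perm_Inv \<sigma>"
  unfolding Inv_def by (simp add: delrpt_pw)

lemma T_pw: "length \<sigma> = k \<Longrightarrow> T a (pw Bs \<sigma>) = pw Bs (T a \<sigma>)"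
  unfolding T_eq_map_transpose pw_eq using block_of by auto

definition block_words :: "nat list set" where
  "block_words = {w \<in> PW n. setpar w = set Bs}"

lemma pw_block_words: "\<sigma> \<in> perms k \<Longrightarrow> pw Bs \<sigma> \<in> block_words"
  unfolding block_words_def using pw_PW setpar_pw by simp

lemma block_words_obtains_perm:
  assumes "w \<in> block_words"
  obtains \<sigma> where "\<sigma> \<in> perms k" "w = pw Bs \<sigma>"
proof -
  have w: "length w = n" "setpar w = set Bs" using assms unfolding block_words_def PW_def by auto
  obtain m where m: "set w = {1..m}" using assms unfolding block_words_def PW_def packed_def by auto
  have fibre_block: "\<exists>a\<in>set w. Bs ! i = fibre w a" if "i < k" for i
    using w(2) nth_mem[OF that] unfolding setpar_def by auto
  define \<sigma> where "\<sigma> = map (\<lambda>i. w ! (Min (Bs ! i) - 1)) [0..<k]"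
  have const: "w ! (p - 1) = \<sigma> ! i" if "i < k" "p \<in> Bs ! i" for i p
    using fibre_block[OF that(1)] block_Min_in[OF that(1)] that unfolding \<sigma>_def fibre_def by auto
  have w_eq: "w = pw Bs \<sigma>"
  proof (rule nth_equalityI)
    fix q assume "q < length w"
    then have q: "Suc q \<in> {1..n}" using w by auto
    then have "block_of (Suc q) < k" "Suc q \<in> Bs ! block_of (Suc q)" using block_of by blast+
    with q show "w ! q = pw Bs \<sigma> ! q" using pw_nth[of "Suc q"] const[of "block_of (Suc q)" "Suc q"] by simp
  qed (use w in simp)
  have "\<sigma> ! i \<noteq> \<sigma> ! j" if ij: "i < k" "j < k" "i \<noteq> j" for i j
  proof
    assume eq: "\<sigma> ! i = \<sigma> ! j"
    obtain a where a: "Bs ! i = fibre w a" using fibre_block[OF ij(1)] by blast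
    obtain b where b: "Bs ! j = fibre w b" using fibre_block[OF ij(2)] by blast
    have "\<sigma> ! i = a" "\<sigma> ! j = b"
      using const[OF ij(1) block_Min_in[OF ij(1)]] const[OF ij(2) block_Min_in[OF ij(2)]]
        block_Min_in[OF ij(1)] block_Min_in[OF ij(2)] a b unfolding fibre_def by auto
    with a b show False using eq blocks_disjoint[OF ij] block_nonempty ij(1) by auto
  qed
  then have "distinct \<sigma>" unfolding \<sigma>_def by (auto simp: distinct_conv_nth)
  moreover have "set \<sigma> = {1..m}" using m w_eq set_pw[of \<sigma>] unfolding \<sigma>_def by simp
  ultimately have "\<sigma> \<in> perms k"
    unfolding perms_def using distinct_card[of \<sigma>] unfolding \<sigma>_def by simp
  then show thesis using w_eq by (rule that)
qed

lemma block_words_delrpt: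
  assumes "w \<in> block_words" shows "delrpt w \<in> perms k" "pw Bs (delrpt w) = w"
  using block_words_obtains_perm[OF assms] delrpt_pw by metis+

lemma nestedX_subset_pairs_upto: "nestedX Bs \<subseteq> pairs_upto k"
  unfolding nestedX_def pairs_upto_def by auto

lemma nestedX_left_closed:
  assumes "(a, c) \<in> nestedX Bs" "a < b" "b < c"
  shows "(a, b) \<in> nestedX Bs"
proof -
  have "1 \<le> a" "c \<le> k" "Min (Bs ! (c - 1)) < Max (Bs ! (a - 1))"
    using assms(1) unfolding nestedX_def by auto
  moreover have "Min (Bs ! (a - 1)) < Min (Bs ! (b - 1))" "Min (Bs ! (b - 1)) < Min (Bs ! (c - 1))"
    using block_Min_less[of "a - 1" "b - 1"] block_Min_less[of "b - 1" "c - 1"] calculation assms(2,3)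
    by auto
  ultimately show ?thesis unfolding nestedX_def using assms(2,3) by auto
qed

lemma not_nestedX_iff:
  assumes "1 \<le> i" "i < j" "j \<le> k"
  shows "(i, j) \<notin> nestedX Bs \<longleftrightarrow> Max (Bs ! (i - 1)) < Min (Bs ! (j - 1))"
proof -
  have ij: "i - 1 < k" "j - 1 < k" "i - 1 \<noteq> j - 1" using assms by auto
  have "Min (Bs ! (j - 1)) \<noteq> Max (Bs ! (i - 1))"
    using blocks_disjoint[OF ij(2,1)] ij(3) block_Min_in[OF ij(2)] block_Max_in[OF ij(1)] by auto
  moreover have "Min (Bs ! (i - 1)) < Min (Bs ! (j - 1))" using block_Min_less[of "i - 1" "j - 1"] assms by auto
  ultimately show ?thesis unfolding nestedX_def using assms by auto
qed

lemma iInv_pw: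
  assumes \<sigma>: "\<sigma> \<in> perms k"
  shows "iInv (pw Bs \<sigma>) = (\<lambda>(i, j). (\<sigma> ! (j - 1), \<sigma> ! (i - 1))) ` (perm_Inv \<sigma> - nestedX Bs)"
proof
  have set_pw_\<sigma>: "set (pw Bs \<sigma>) = set \<sigma>" using set_pw[OF perms_length[OF \<sigma>]] .
  show "(\<lambda>(i, j). (\<sigma> ! (j - 1), \<sigma> ! (i - 1))) ` (perm_Inv \<sigma> - nestedX Bs) \<subseteq> iInv (pw Bs \<sigma>)"
  proof clarify
    fix i j assume ij: "(i, j) \<in> perm_Inv \<sigma>" "(i, j) \<notin> nestedX Bs"
    then have r: "1 \<le> i" "i < j" "j \<le> k" "\<sigma> ! (j - 1) < \<sigma> ! (i - 1)"
      unfolding perm_Inv_perms[OF \<sigma>] by auto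
    have "\<sigma> ! (i - 1) \<in> set \<sigma>" "\<sigma> ! (j - 1) \<in> set \<sigma>" using r perms_length[OF \<sigma>] by auto
    then show "(\<sigma> ! (j - 1), \<sigma> ! (i - 1)) \<in> iInv (pw Bs \<sigma>)"
      unfolding iInv_def set_pw_\<sigma> using r ij(2) not_nestedX_iff[OF r(1-3)] fibre_pw[OF \<sigma>] by simp
  qed
  show "iInv (pw Bs \<sigma>) \<subseteq> (\<lambda>(i, j). (\<sigma> ! (j - 1), \<sigma> ! (i - 1))) ` (perm_Inv \<sigma> - nestedX Bs)"
  proof clarify
    fix a b assume ab: "(a, b) \<in> iInv (pw Bs \<sigma>)"
    then have "a \<in> set \<sigma>" "b \<in> set \<sigma>" "a < b" unfolding iInv_def set_pw_\<sigma> by auto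
    then obtain i j where i: "i < k" "\<sigma> ! i = b" and j: "j < k" "\<sigma> ! j = a"
      using perms_length[OF \<sigma>] by (metis in_set_conv_nth)
    have gt: "Max (Bs ! i) < Min (Bs ! j)"
      using ab fibre_pw[OF \<sigma> i(1)] fibre_pw[OF \<sigma> j(1)] unfolding iInv_def i(2) j(2) by auto
    then have "i < j" using block_Min_le_Max[OF i(1)] block_Min_less_iff[OF i(1) j(1)] by linarith
    then have "(Suc i, Suc j) \<in> perm_Inv \<sigma> - nestedX Bs"
      using not_nestedX_iff[of "Suc i" "Suc j"] gt i j \<open>a < b\<close> unfolding perm_Inv_perms[OF \<sigma>] by auto
    moreover have "(a, b) = (\<sigma> ! (Suc j - 1), \<sigma> ! (Suc i - 1))" using i j by simp
    ultimately show "(a, b) \<in> (\<lambda>(i, j). (\<sigma> ! (j - 1), \<sigma> ! (i - 1))) ` (perm_Inv \<sigma> - nestedX Bs)"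
      by force
  qed
qed

lemma card_iInv_pw:
  assumes \<sigma>: "\<sigma> \<in> perms k"
  shows "card (iInv (pw Bs \<sigma>)) = card (perm_Inv \<sigma> - nestedX Bs)"
proof -
  have "inj_on (\<lambda>(i, j). (\<sigma> ! (j - 1), \<sigma> ! (i - 1))) (perm_Inv \<sigma> - nestedX Bs)"
    using perms_nth_eq_iff[OF \<sigma>] unfolding perm_Inv_perms[OF \<sigma>] by (auto simp: inj_on_def)
  then show ?thesis unfolding iInv_pw[OF \<sigma>] by (rule card_image)
qed

lemma pcover_pw_T:
  assumes \<sigma>: "\<sigma> \<in> perms k" and ij: "(i, j) \<in> perm_Inv \<sigma> - nestedX Bs"
    and adj: "\<sigma> ! (i - 1) = Suc (\<sigma> ! (j - 1))"
  shows "pcover n (pw Bs (T (\<sigma> ! (j - 1)) \<sigma>)) (pw Bs \<sigma>)"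
    and "T (\<sigma> ! (j - 1)) \<sigma> \<in> perms k"
    and "perm_Inv (T (\<sigma> ! (j - 1)) \<sigma>) = perm_Inv \<sigma> - {(i, j)}"
proof -
  let ?a = "\<sigma> ! (j - 1)"
  have r: "1 \<le> i" "i < j" "j \<le> k" using ij unfolding perm_Inv_perms[OF \<sigma>] by auto
  then have a: "1 \<le> ?a" "?a < k" using perms_nth_mem[OF \<sigma>, of i] perms_nth_mem[OF \<sigma>, of j] adj by auto
  show "T ?a \<sigma> \<in> perms k" using T_perms[OF \<sigma> a] .
  show Inv_T: "perm_Inv (T ?a \<sigma>) = perm_Inv \<sigma> - {(i, j)}"
    by (rule perm_Inv_T[OF \<sigma> r adj refl])
  have "finite (perm_Inv \<sigma> - nestedX Bs)" using finite_perm_Inv[OF \<sigma>] by blast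
  then have "card (perm_Inv \<sigma> - nestedX Bs) = Suc (card (perm_Inv \<sigma> - nestedX Bs - {(i, j)}))"
    using ij by (rule card.remove)
  moreover have "perm_Inv \<sigma> - nestedX Bs - {(i, j)} = perm_Inv (T ?a \<sigma>) - nestedX Bs"
    unfolding Inv_T by blast
  ultimately have "card (perm_Inv \<sigma> - nestedX Bs) = card (perm_Inv (T ?a \<sigma>) - nestedX Bs) + 1"
    by simp
  then show "pcover n (pw Bs (T ?a \<sigma>)) (pw Bs \<sigma>)"
    unfolding pcover_def using pw_PW[OF \<sigma>] pw_PW[OF T_perms[OF \<sigma> a]] T_pw[OF perms_length[OF \<sigma>]]
      card_iInv_pw[OF \<sigma>] card_iInv_pw[OF T_perms[OF \<sigma> a]] by auto
qed

text \<open>A swap of adjacent values removes or adds one inversion, and only removing a non-nested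
  one lowers the number of inversions of the word.\<close>
lemma pcover_block_words:
  assumes w: "w \<in> block_words" and cover: "pcover n u w"
  shows "u \<in> block_words" "\<exists>p \<in> Inv w - nestedX Bs. Inv u = Inv w - {p}"
proof -
  obtain \<sigma> where \<sigma>: "\<sigma> \<in> perms k" and w_eq: "w = pw Bs \<sigma>" using block_words_obtains_perm[OF w] .
  obtain a where u_eq: "u = T a w" and card: "card (iInv w) = card (iInv u) + 1" and "u \<in> PW n"
    using cover unfolding pcover_def by blast
  have u_pw: "u = pw Bs (T a \<sigma>)" using u_eq w_eq T_pw[OF perms_length[OF \<sigma>]] by simp
  have "T a \<sigma> \<noteq> \<sigma>" using card u_pw w_eq by auto
  moreover have "packed (T a \<sigma>)"
    using \<open>u \<in> PW n\<close> u_pw set_pw[of "T a \<sigma>"] perms_length[OF \<sigma>]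
    unfolding PW_def packed_def T_eq_map_transpose by auto
  ultimately have a: "1 \<le> a" "a < k" using packed_T_perm[OF \<sigma>] by blast+
  have \<sigma>': "T a \<sigma> \<in> perms k" using T_perms[OF \<sigma> a] .
  show "u \<in> block_words" unfolding u_pw by (rule pw_block_words[OF \<sigma>'])
  have card_Inv: "card (perm_Inv \<sigma> - nestedX Bs) = card (perm_Inv (T a \<sigma>) - nestedX Bs) + 1"
    using card card_iInv_pw[OF \<sigma>] card_iInv_pw[OF \<sigma>'] u_pw w_eq by simp
  have Inv_eq: "Inv w = perm_Inv \<sigma>" "Inv u = perm_Inv (T a \<sigma>)"
    using Inv_pw[OF \<sigma>] Inv_pw[OF \<sigma>'] w_eq u_pw by simp_all
  from \<sigma> a show "\<exists>p \<in> Inv w - nestedX Bs. Inv u = Inv w - {p}"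
  proof (cases rule: perm_Inv_T_cases)
    case (1 i j)
    have "(i, j) \<notin> nestedX Bs"
    proof
      assume "(i, j) \<in> nestedX Bs"
      then have "perm_Inv (T a \<sigma>) - nestedX Bs = perm_Inv \<sigma> - nestedX Bs" using 1(2) by blast
      with card_Inv show False by simp
    qed
    with 1 Inv_eq show ?thesis by blast
  next
    case (2 i j)
    then have "perm_Inv \<sigma> - nestedX Bs \<subseteq> perm_Inv (T a \<sigma>) - nestedX Bs" by blast
    then have "card (perm_Inv \<sigma> - nestedX Bs) \<le> card (perm_Inv (T a \<sigma>) - nestedX Bs)"
      using finite_perm_Inv[OF \<sigma>'] by (intro card_mono) auto
    with card_Inv show ?thesis by simp
  qed
qed

lemma tranclp_pcover_block_words:
  assumes "(pcover n)\<^sup>+\<^sup>+ u w" "w \<in> block_words"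
  shows "u \<in> block_words \<and> Inv u \<subseteq> Inv w \<and> Inv u \<inter> nestedX Bs = Inv w \<inter> nestedX Bs"
  using assms
proof (induction rule: converse_tranclp_induct)
  case (base u)
  then show ?case using pcover_block_words by blast
next
  case (step u v)
  then have "v \<in> block_words \<and> Inv v \<subseteq> Inv w \<and> Inv v \<inter> nestedX Bs = Inv w \<inter> nestedX Bs" by blast
  moreover have "u \<in> block_words" "\<exists>p \<in> Inv v - nestedX Bs. Inv u = Inv v - {p}"
    using pcover_block_words step(1) calculation by blast+
  ultimately show ?case by blast
qed

lemma pwo_le_if_Inv_subset:
  assumes "u \<in> block_words" "w \<in> block_words" "Inv u \<subseteq> Inv w"
    and "Inv u \<inter> nestedX Bs = Inv w \<inter> nestedX Bs"
  shows "pwo_le n u w"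
  using assms(2-)
proof (induction "card (Inv w - Inv u)" arbitrary: w rule: less_induct)
  case less
  let ?\<sigma> = "delrpt u" and ?\<tau> = "delrpt w"
  have \<sigma>: "?\<sigma> \<in> perms k" "pw Bs ?\<sigma> = u" and \<tau>: "?\<tau> \<in> perms k" "pw Bs ?\<tau> = w"
    using block_words_delrpt assms(1) less.prems(1) by blast+
  show ?case
  proof (cases "Inv u = Inv w")
    case True
    then have "u = w" using \<sigma> \<tau> perm_Inv_inj_on[of k] unfolding Inv_def by (metis inj_onD)
    then show ?thesis using assms(1) unfolding pwo_le_def block_words_def by simp
  next
    case False
    then have "perm_Inv ?\<sigma> \<subset> perm_Inv ?\<tau>" using less.prems(2) unfolding Inv_def by blast
    then obtain i j where ij: "(i, j) \<in> perm_Inv ?\<tau> - perm_Inv ?\<sigma>" "?\<tau> ! (i - 1) = Suc (?\<tau> ! (j - 1))"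
      by (rule perm_Inv_psubset_obtains_adjacent[OF \<sigma>(1) \<tau>(1)])
    have ijX: "(i, j) \<in> perm_Inv ?\<tau> - nestedX Bs"
      using ij(1) less.prems(3) unfolding Inv_def by blast
    note swap = pcover_pw_T[OF \<tau>(1) ijX ij(2)]
    define w' where "w' = pw Bs (T (?\<tau> ! (j - 1)) ?\<tau>)"
    have cover: "pcover n w' w" using swap(1) \<tau>(2) unfolding w'_def by simp
    have w': "w' \<in> block_words" "Inv w' = Inv w - {(i, j)}"
      unfolding w'_def using pw_block_words[OF swap(2)] Inv_pw[OF swap(2)] swap(3)
      by (simp_all add: Inv_def[of w])
    have "finite (Inv w - Inv u)" using finite_perm_Inv[OF \<tau>(1)] unfolding Inv_def by blast
    moreover have "(i, j) \<in> Inv w - Inv u" using ij(1) unfolding Inv_def by blast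
    ultimately have "card (Inv w - Inv u - {(i, j)}) < card (Inv w - Inv u)"
      by (rule card_Diff1_less)
    moreover have "Inv w' - Inv u = Inv w - Inv u - {(i, j)}" unfolding w'(2) by blast
    ultimately have "card (Inv w' - Inv u) < card (Inv w - Inv u)" by simp
    moreover have "Inv u \<subseteq> Inv w'" "Inv u \<inter> nestedX Bs = Inv w' \<inter> nestedX Bs"
      using less.prems(2,3) ij(1) ijX unfolding w'(2) by (auto simp: Inv_def)
    ultimately have "pwo_le n u w'" using less.hyps w'(1) by blast
    then show ?thesis using cover unfolding w'_def by (rule pwo_le_pcover_trans)
  qed
qed

theorem pwo_le_block_words_iff:
  assumes "w \<in> block_words"
  shows "pwo_le n u w \<longleftrightarrow>
    u \<in> block_words \<and> Inv u \<subseteq> Inv w \<and> Inv u \<inter> nestedX Bs = Inv w \<inter> nestedX Bs"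
  using assms tranclp_pcover_block_words pwo_le_if_Inv_subset unfolding pwo_le_def by blast

end

section \<open>The classes \<open>W\<^sub>A\<close>\<close>

locale nested_pattern = ordered_blocks +
  fixes A :: "(nat \<times> nat) set"
  assumes A_subset_nestedX: "A \<subseteq> nestedX Bs"
begin

definition pattern_perms :: "nat list set" where
  "pattern_perms = {\<rho> \<in> perms k. perm_Inv \<rho> \<inter> nestedX Bs = A}"

lemma WA_iff: "w \<in> WA n Bs A \<longleftrightarrow> w \<in> block_words \<and> Inv w \<inter> nestedX Bs = A"
  unfolding WA_def block_words_def using A_subset_nestedX by blast

lemma delrpt_WA: "w \<in> WA n Bs A \<Longrightarrow> delrpt w \<in> pattern_perms"
  and pw_delrpt_WA: "w \<in> WA n Bs A \<Longrightarrow> pw Bs (delrpt w) = w"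
  unfolding WA_iff pattern_perms_def Inv_def using block_words_delrpt by auto

lemma pw_pattern_perms: "\<rho> \<in> pattern_perms \<Longrightarrow> pw Bs \<rho> \<in> WA n Bs A"
  unfolding WA_iff pattern_perms_def by (simp add: pw_block_words Inv_pw)

lemma bij_betw_delrpt_WA: "bij_betw delrpt (WA n Bs A) pattern_perms"
proof (rule bij_betw_byWitness[where f' = "pw Bs"])
  show "\<forall>w \<in> WA n Bs A. pw Bs (delrpt w) = w" using pw_delrpt_WA by blast
  show "\<forall>\<rho> \<in> pattern_perms. delrpt (pw Bs \<rho>) = \<rho>" using delrpt_pw unfolding pattern_perms_def by blast
  show "delrpt ` WA n Bs A \<subseteq> pattern_perms" using delrpt_WA by blast
  show "pw Bs ` pattern_perms \<subseteq> WA n Bs A" using pw_pattern_perms by blast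
qed

lemma pwo_le_WA_iff:
  "u \<in> WA n Bs A \<Longrightarrow> v \<in> WA n Bs A \<Longrightarrow> pwo_le n u v \<longleftrightarrow> perm_le (delrpt u) (delrpt v)"
proof -
  assume "u \<in> WA n Bs A" "v \<in> WA n Bs A"
  then have "u \<in> block_words" "v \<in> block_words" "Inv u \<inter> nestedX Bs = Inv v \<inter> nestedX Bs"
    unfolding WA_iff by simp_all
  then show ?thesis
    unfolding pwo_le_block_words_iff[OF \<open>v \<in> block_words\<close>] perm_le_def Inv_def[symmetric] by simp
qed

lemma perm_join_pattern_perms:
  assumes "\<sigma> \<in> pattern_perms" "\<tau> \<in> pattern_perms"
  shows "perm_join \<sigma> \<tau> \<in> pattern_perms"
proof -
  have \<sigma>: "\<sigma> \<in> perms k" "perm_Inv \<sigma> \<inter> nestedX Bs = A"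
    and \<tau>: "\<tau> \<in> perms k" "perm_Inv \<tau> \<inter> nestedX Bs = A"
    using assms unfolding pattern_perms_def by auto
  have "perm_Inv \<sigma> \<union> perm_Inv \<tau> \<subseteq> {(a, b). a < b}"
    using perm_Inv_subset_pairs_upto \<sigma>(1) \<tau>(1) unfolding pairs_upto_def by blast
  then have "(perm_Inv \<sigma> \<union> perm_Inv \<tau>)\<^sup>+ \<inter> nestedX Bs \<subseteq> perm_Inv \<sigma>"
    using trancl_Un_Int_subset trans_perm_Inv \<sigma> \<tau> nestedX_left_closed by metis
  then have "(perm_Inv \<sigma> \<union> perm_Inv \<tau>)\<^sup>+ \<inter> nestedX Bs = A" using \<sigma>(2) by auto
  then show ?thesis
    unfolding pattern_perms_def using perm_join_perms[OF \<sigma>(1) \<tau>(1)] by simp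
qed

lemma perm_meet_pattern_perms:
  assumes "\<sigma> \<in> pattern_perms" "\<tau> \<in> pattern_perms"
  shows "perm_meet \<sigma> \<tau> \<in> pattern_perms"
proof -
  have \<sigma>: "\<sigma> \<in> perms k" "perm_Inv \<sigma> \<inter> nestedX Bs = A"
    and \<tau>: "\<tau> \<in> perms k" "perm_Inv \<tau> \<inter> nestedX Bs = A"
    using assms unfolding pattern_perms_def by auto
  define I J where "I = pairs_upto k - perm_Inv \<sigma>" and "J = pairs_upto k - perm_Inv \<tau>"
  have inv: "inversion_set k I" "inversion_set k J"
    unfolding I_def J_def using inversion_set_Diff inversion_set_perm_Inv \<sigma>(1) \<tau>(1) by blast+
  then have "I \<union> J \<subseteq> {(a, b). a < b}" "trans I" "trans J"
    unfolding inversion_set_def pairs_upto_def by blast+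
  moreover have "I \<inter> nestedX Bs = J \<inter> nestedX Bs"
    using \<sigma>(2) \<tau>(2) nestedX_subset_pairs_upto unfolding I_def J_def by blast
  ultimately have "(I \<union> J)\<^sup>+ \<inter> nestedX Bs \<subseteq> I"
    using trancl_Un_Int_subset nestedX_left_closed by metis
  then have "(pairs_upto k - (I \<union> J)\<^sup>+) \<inter> nestedX Bs = A"
    using \<sigma>(2) nestedX_subset_pairs_upto unfolding I_def by auto
  then show ?thesis
    unfolding pattern_perms_def using perm_meet_perms[OF \<sigma>(1) \<tau>(1)] unfolding I_def J_def by simp
qed

lemma is_lub_on_WA:
  assumes "u \<in> WA n Bs A" "w \<in> WA n Bs A"
  shows "is_lub_on (pwo_le n) (WA n Bs A) u w (pw Bs (perm_join (delrpt u) (delrpt w)))"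
proof (rule is_lub_on_transfer[where f = delrpt and g = "pw Bs" and S = "perms k"
    and z = "perm_join (delrpt u) (delrpt w)"])
  have "perm_join (delrpt u) (delrpt w) \<in> pattern_perms"
    using perm_join_pattern_perms delrpt_WA assms by blast
  then show "pw Bs (perm_join (delrpt u) (delrpt w)) \<in> WA n Bs A"
    and "delrpt (pw Bs (perm_join (delrpt u) (delrpt w))) = perm_join (delrpt u) (delrpt w)"
    using pw_pattern_perms delrpt_pw unfolding pattern_perms_def by auto
  show "is_lub_on perm_le (perms k) (delrpt u) (delrpt w) (perm_join (delrpt u) (delrpt w))"
    using perm_join_perms(3) delrpt_WA assms unfolding pattern_perms_def by blast
qed (use assms pwo_le_WA_iff delrpt_WA pattern_perms_def in auto)

lemma is_glb_on_WA:
  assumes "u \<in> WA n Bs A" "w \<in> WA n Bs A"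
  shows "is_glb_on (pwo_le n) (WA n Bs A) u w (pw Bs (perm_meet (delrpt u) (delrpt w)))"
proof (rule is_glb_on_transfer[where f = delrpt and g = "pw Bs" and S = "perms k"
    and z = "perm_meet (delrpt u) (delrpt w)"])
  have "perm_meet (delrpt u) (delrpt w) \<in> pattern_perms"
    using perm_meet_pattern_perms delrpt_WA assms by blast
  then show "pw Bs (perm_meet (delrpt u) (delrpt w)) \<in> WA n Bs A"
    and "delrpt (pw Bs (perm_meet (delrpt u) (delrpt w))) = perm_meet (delrpt u) (delrpt w)"
    using pw_pattern_perms delrpt_pw unfolding pattern_perms_def by auto
  show "is_glb_on perm_le (perms k) (delrpt u) (delrpt w) (perm_meet (delrpt u) (delrpt w))"
    using perm_meet_perms(3) delrpt_WA assms unfolding pattern_perms_def by blast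
qed (use assms pwo_le_WA_iff delrpt_WA pattern_perms_def in auto)

lemma tranclp_pcover_WA_iff:
  assumes "(pcover n)\<^sup>+\<^sup>+ u w"
  shows "u \<in> WA n Bs A \<longleftrightarrow> w \<in> WA n Bs A"
proof
  assume "w \<in> WA n Bs A"
  then show "u \<in> WA n Bs A" using tranclp_pcover_block_words[OF assms] unfolding WA_iff by auto
next
  assume u: "u \<in> WA n Bs A"
  then have "w \<in> block_words"
    using tranclp_pcoverD(2,4)[OF assms] unfolding WA_iff block_words_def by auto
  with u show "w \<in> WA n Bs A" using tranclp_pcover_block_words[OF assms] unfolding WA_iff by auto
qed

lemma WA_eq_pconn_class:
  assumes u: "u \<in> WA n Bs A"
  shows "{v \<in> PW n. pconn n u v} = WA n Bs A"
proof
  have "v \<in> WA n Bs A" if "pconn n u v" for v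
    using that unfolding pconn_eq
  proof (induction rule: rtranclp_induct)
    case (step y z)
    from \<open>symclp (hasse n) y z\<close> show ?case
    proof cases
      case base
      then show ?thesis using step.IH tranclp_pcover_WA_iff hasse_imp_tranclp_pcover by blast
    next
      case sym
      then show ?thesis using step.IH tranclp_pcover_WA_iff hasse_imp_tranclp_pcover by blast
    qed
  qed (rule u)
  then show "{v \<in> PW n. pconn n u v} \<subseteq> WA n Bs A" by blast
  show "WA n Bs A \<subseteq> {v \<in> PW n. pconn n u v}"
  proof
    fix v assume v: "v \<in> WA n Bs A"
    let ?m = "pw Bs (perm_meet (delrpt u) (delrpt v))"
    have "pwo_le n ?m u" "pwo_le n ?m v" using is_glb_on_WA[OF u v] unfolding is_glb_on_def by auto
    then have "pconn n u v" using pwo_le_imp_pconn pconn_sym pconn_trans by blast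
    moreover have "v \<in> PW n" using v unfolding WA_def by blast
    ultimately show "v \<in> {v \<in> PW n. pconn n u v}" by blast
  qed
qed

lemma is_component_WA: "WA n Bs A \<noteq> {} \<Longrightarrow> is_component n (WA n Bs A)"
  unfolding is_component_def using WA_eq_pconn_class WA_def by blast

lemma finite_WA: "finite (WA n Bs A)"
  using bij_betw_finite[OF bij_betw_delrpt_WA] finite_perms unfolding pattern_perms_def by simp

lemma pwo_le_WA_trans:
  "u \<in> WA n Bs A \<Longrightarrow> v \<in> WA n Bs A \<Longrightarrow> w \<in> WA n Bs A \<Longrightarrow>
    pwo_le n u v \<Longrightarrow> pwo_le n v w \<Longrightarrow> pwo_le n u w"
  unfolding pwo_le_WA_iff perm_le_def by blast

lemma WA_bounded:
  assumes "WA n Bs A \<noteq> {}"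
  shows "\<exists>bot \<in> WA n Bs A. \<exists>top \<in> WA n Bs A. \<forall>x \<in> WA n Bs A. pwo_le n bot x \<and> pwo_le n x top"
proof -
  obtain bot where "bot \<in> WA n Bs A" "\<And>x. x \<in> WA n Bs A \<Longrightarrow> pwo_le n bot x"
    using finite_is_glb_on_obtains_least[OF finite_WA assms, of "pwo_le n"] pwo_le_WA_trans
      is_glb_on_WA by blast
  moreover obtain top where "top \<in> WA n Bs A" "\<And>x. x \<in> WA n Bs A \<Longrightarrow> pwo_le n x top"
    using finite_is_glb_on_obtains_least[OF finite_WA assms, of "\<lambda>x y. pwo_le n y x"] pwo_le_WA_trans
      is_lub_on_WA unfolding is_lub_on_conv_is_glb_on by blast
  ultimately show ?thesis by blast
qed

lemma WA_interval:
  assumes "WA n Bs A \<noteq> {}"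
  shows "\<exists>\<sigma> \<in> perms k. \<exists>\<tau> \<in> perms k. perm_le \<sigma> \<tau> \<and>
    bij_betw delrpt (WA n Bs A) {\<rho> \<in> perms k. perm_le \<sigma> \<rho> \<and> perm_le \<rho> \<tau>}"
proof -
  obtain bot top where bot: "bot \<in> WA n Bs A" and top: "top \<in> WA n Bs A"
    and bounds: "\<And>x. x \<in> WA n Bs A \<Longrightarrow> pwo_le n bot x \<and> pwo_le n x top"
    using WA_bounded[OF assms] by blast
  let ?\<sigma> = "delrpt bot" and ?\<tau> = "delrpt top"
  have interval: "{\<rho> \<in> perms k. perm_le ?\<sigma> \<rho> \<and> perm_le \<rho> ?\<tau>} = pattern_perms"
  proof
    show "{\<rho> \<in> perms k. perm_le ?\<sigma> \<rho> \<and> perm_le \<rho> ?\<tau>} \<subseteq> pattern_perms"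
      using delrpt_WA[OF bot] delrpt_WA[OF top] unfolding pattern_perms_def perm_le_def by blast
    show "pattern_perms \<subseteq> {\<rho> \<in> perms k. perm_le ?\<sigma> \<rho> \<and> perm_le \<rho> ?\<tau>}"
    proof
      fix \<rho> assume \<rho>: "\<rho> \<in> pattern_perms"
      then have "pwo_le n bot (pw Bs \<rho>)" "pwo_le n (pw Bs \<rho>) top" using bounds pw_pattern_perms by blast+
      then show "\<rho> \<in> {\<rho> \<in> perms k. perm_le ?\<sigma> \<rho> \<and> perm_le \<rho> ?\<tau>}"
        using \<rho> bot top pwo_le_WA_iff pw_pattern_perms delrpt_pw unfolding pattern_perms_def by auto
    qed
  qed
  show ?thesis
  proof (intro bexI conjI)
    show "perm_le ?\<sigma> ?\<tau>" using bounds[OF top] pwo_le_WA_iff[OF bot top] by blast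
    show "bij_betw delrpt (WA n Bs A) {\<rho> \<in> perms k. perm_le ?\<sigma> \<rho> \<and> perm_le \<rho> ?\<tau>}"
      unfolding interval by (rule bij_betw_delrpt_WA)
    show "?\<sigma> \<in> perms k" "?\<tau> \<in> perms k"
      using delrpt_WA[OF bot] delrpt_WA[OF top] unfolding pattern_perms_def by auto
  qed
qed

end

lemma is_component_obtains_WA:
  assumes "is_component n W"
  obtains Bs A where "ordered_partition n Bs" "A \<subseteq> nestedX Bs" "W = WA n Bs A"
proof -
  obtain u where u: "u \<in> PW n" and W: "W = {v \<in> PW n. pconn n u v}"
    using assms unfolding is_component_def by blast
  obtain Bs where Bs: "ordered_partition n Bs" "set Bs = setpar u"
    using PW_obtains_ordered_partition[OF u] .
  interpret nested_pattern n Bs "Inv u \<inter> nestedX Bs"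
    by unfold_locales (use Bs(1) in auto)
  have "u \<in> WA n Bs (Inv u \<inter> nestedX Bs)" using u Bs(2) unfolding WA_def by auto
  then have "W = WA n Bs (Inv u \<inter> nestedX Bs)" using W WA_eq_pconn_class by simp
  with Bs(1) show thesis by (intro that) auto
qed

theorem mainTheorem7:
  fixes n :: nat
  shows "(\<forall>Bs A. ordered_partition n Bs \<and> A \<subseteq> nestedX Bs \<and> WA n Bs A \<noteq> {} \<longrightarrow>
            (let W = WA n Bs A; k = length Bs in
              is_component n W \<and>
              (\<exists>bot\<in>W. \<exists>top\<in>W. \<forall>x\<in>W. pwo_le n bot x \<and> pwo_le n x top) \<and>
              (\<forall>u\<in>W. \<forall>w\<in>W. \<exists>j m. is_lub_on (pwo_le n) W u w j \<and> is_glb_on (pwo_le n) W u w m) \<and>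
              (\<exists>\<sigma>\<in>perms k. \<exists>\<tau>\<in>perms k. perm_le \<sigma> \<tau> \<and>
                 bij_betw delrpt W {\<rho> \<in> perms k. perm_le \<sigma> \<rho> \<and> perm_le \<rho> \<tau>} \<and>
                 (\<forall>u\<in>W. \<forall>v\<in>W. pwo_le n u v \<longleftrightarrow> perm_le (delrpt u) (delrpt v))) \<and>
              (\<forall>u\<in>W. \<forall>w\<in>W.
                 is_lub_on (pwo_le n) W u w (pw Bs (perm_join (delrpt u) (delrpt w))) \<and>
                 is_glb_on (pwo_le n) W u w (pw Bs (perm_meet (delrpt u) (delrpt w))))))
      \<and> (\<forall>W. is_component n W \<longrightarrow>
            (\<exists>Bs A. ordered_partition n Bs \<and> A \<subseteq> nestedX Bs \<and> W = WA n Bs A))"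
proof (intro conjI allI impI, goal_cases)
  case (1 Bs A)
  then interpret nested_pattern n Bs A by unfold_locales auto
  have nonempty: "WA n Bs A \<noteq> {}" using 1 by blast
  show ?case
    unfolding Let_def using is_component_WA[OF nonempty] WA_bounded[OF nonempty]
      WA_interval[OF nonempty] is_lub_on_WA is_glb_on_WA pwo_le_WA_iff by blast
next
  case (2 W)
  then show ?case using is_component_obtains_WA by metis
qed

end
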